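(* Let $(\mathcal M,g)$ be an oriented three-dimensional (pseudo-)Riemannian manifold and suppose that at every point $\Phi_{ab}$ is of Petrov type D, i.e. it has exactly two distinct principal null structures $\mathcal N$ and $\mathcal N'$, each of multiplicity exactly $2$. Let $k^a$, $\ell^a$ be generators of $\mathcal N$, $\mathcal N'$ respectively, and suppose $$k^ak^b\left(A_{abc}+3g_{bc}\nabla_aS\right)=0,\qquad \ell^a\ell^b\left(A_{abc}+3g_{bc}\nabla_aS\right)=0.$$ Then both $\mathcal N$ and $\mathcal N'$ are co-geodetic.
   Context: Abstract index notation; $\nabla$ the Levi-Civita connection; brackets denote (skew-)symmetrisation with weight $1/2$. $R_{abd}{}^cV^d=2\nabla_{[a}\nabla_{b]}V^c$, $R_{ab}=R_{acb}{}^c$, $R=R_a{}^a$, $\Phi_{ab}=R_{ab}-\frac13Rg_{ab}$, $S=\frac1{12}R$, Cotton tensor $A_{abc}=-2\nabla_{[b}\Phi_{c]a}+2g_{a[b}\nabla_{c]}S$. $g,\nabla$ extended complex-(bi)linearly to $T^{\mathbb C}\mathcal M$. A null structure is a complex line subbundle $\mathcal N\subset T^{\mathbb C}\mathcal M$ with $g(k,k)=0$ for all sections; a generator is a nowhere-vanishing section; $\mathcal N^\perp$ its orthogonal complement. $\mathcal N$ is co-geodetic if $g(\nabla_XY,Z)=0$ for all sections $X,Y$ of $\mathcal N^\perp$, $Z$ of $\mathcal N$. Principal null structures: for a null structure with generator $k$, pick a frame $(k,\ell,n)$ with $g(k,\ell)=1$, $g(n,n)=-\frac12$, other pairings zero;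 $\Phi_0=\frac12\Phi_{ab}k^ak^b$, $\Phi_1=\frac12\Phi_{ab}k^an^b$, $\Phi_2=\frac12\Phi_{ab}k^a\ell^b$, $\Phi_3=\frac12\Phi_{ab}\ell^an^b$, $\Phi_4=\frac12\Phi_{ab}\ell^a\ell^b$; $\Phi(z)=\Phi_0+4\Phi_1z+6\Phi_2z^2+4\Phi_3z^3+\Phi_4z^4=\frac12\Phi_{ab}\xi^a\xi^b$ with $\xi(z)=k+2zn+z^2\ell$, so null directions correspond to $z\in\mathbb{CP}^1$ and the roots of $\Phi$ (with multiplicity) are the principal null structures. Type D: two distinct roots each of multiplicity 2; in a frame with $k,\ell$ generating the two, $\Phi_0=\Phi_1=\Phi_3=\Phi_4=0\neq\Phi_2$. *)

theory Defs
  imports "HOL-Analysis.Analysis"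
begin

text \<open>Local coordinate model: the manifold is an open set U of real^3, tensors are
given by their components in the coordinate frame (indices of type 3).
Complex vector fields are maps U -> complex^3.\<close>

type_synonym pt = "real^3"

definition pd :: "3 \<Rightarrow> (pt \<Rightarrow> 'b::real_normed_vector) \<Rightarrow> pt \<Rightarrow> 'b" where
  "pd i f x = vector_derivative (\<lambda>t. f (x + t *\<^sub>R axis i 1)) (at 0)"

coinductive smooth_on :: "pt set \<Rightarrow> (pt \<Rightarrow> 'b::real_normed_vector) \<Rightarrow> bool" where
  "f differentiable_on U \<Longrightarrow> (\<forall>i. smooth_on U (pd i f)) \<Longrightarrow> smooth_on U f"

definition metric_on :: "pt set \<Rightarrow> (pt \<Rightarrow> 3 \<Rightarrow> 3 \<Rightarrow> real) \<Rightarrow> bool" where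
  "metric_on U g \<longleftrightarrow> open U \<and> (\<forall>i j. smooth_on U (\<lambda>x. g x i j)) \<and>
     (\<forall>x\<in>U. \<forall>i j. g x i j = g x j i) \<and>
     (\<forall>x\<in>U. det (\<chi> i j. g x i j) \<noteq> 0)"

definition ginv :: "(pt \<Rightarrow> 3 \<Rightarrow> 3 \<Rightarrow> real) \<Rightarrow> pt \<Rightarrow> 3 \<Rightarrow> 3 \<Rightarrow> real" where
  "ginv g x i j = matrix_inv (\<chi> a b. g x a b) $ i $ j"

text \<open>Christoffel symbols Gamma^c_{ab} = chr g x c a b.\<close>
definition chr :: "(pt \<Rightarrow> 3 \<Rightarrow> 3 \<Rightarrow> real) \<Rightarrow> pt \<Rightarrow> 3 \<Rightarrow> 3 \<Rightarrow> 3 \<Rightarrow> real" where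
  "chr g x c a b = (\<Sum>d\<in>UNIV. ginv g x c d *
      (pd a (\<lambda>y. g y b d) x + pd b (\<lambda>y. g y a d) x - pd d (\<lambda>y. g y a b) x)) / 2"

text \<open>Riemann tensor R_{abd}^c = riem g x a b d c, with R_{abd}^c V^d = 2 nabla_[a nabla_b] V^c.\<close>
definition riem :: "(pt \<Rightarrow> 3 \<Rightarrow> 3 \<Rightarrow> real) \<Rightarrow> pt \<Rightarrow> 3 \<Rightarrow> 3 \<Rightarrow> 3 \<Rightarrow> 3 \<Rightarrow> real" where
  "riem g x a b d c = pd a (\<lambda>y. chr g y c b d) x - pd b (\<lambda>y. chr g y c a d) x
     + (\<Sum>e\<in>UNIV. chr g x c a e * chr g x e b d - chr g x c b e * chr g x e a d)"

definition ric :: "(pt \<Rightarrow> 3 \<Rightarrow> 3 \<Rightarrow> real) \<Rightarrow> pt \<Rightarrow> 3 \<Rightarrow> 3 \<Rightarrow> real" where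
  "ric g x a b = (\<Sum>c\<in>UNIV. riem g x a c b c)"

definition scal :: "(pt \<Rightarrow> 3 \<Rightarrow> 3 \<Rightarrow> real) \<Rightarrow> pt \<Rightarrow> real" where
  "scal g x = (\<Sum>a\<in>UNIV. \<Sum>b\<in>UNIV. ginv g x a b * ric g x a b)"

definition Phi :: "(pt \<Rightarrow> 3 \<Rightarrow> 3 \<Rightarrow> real) \<Rightarrow> pt \<Rightarrow> 3 \<Rightarrow> 3 \<Rightarrow> real" where
  "Phi g x a b = ric g x a b - scal g x * g x a b / 3"

definition Sc :: "(pt \<Rightarrow> 3 \<Rightarrow> 3 \<Rightarrow> real) \<Rightarrow> pt \<Rightarrow> real" where
  "Sc g x = scal g x / 12"

definition nablaPhi :: "(pt \<Rightarrow> 3 \<Rightarrow> 3 \<Rightarrow> real) \<Rightarrow> pt \<Rightarrow> 3 \<Rightarrow> 3 \<Rightarrow> 3 \<Rightarrow> real" where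
  "nablaPhi g x b c a = pd b (\<lambda>y. Phi g y c a) x
     - (\<Sum>e\<in>UNIV. chr g x e b c * Phi g x e a + chr g x e b a * Phi g x c e)"

definition cotton :: "(pt \<Rightarrow> 3 \<Rightarrow> 3 \<Rightarrow> real) \<Rightarrow> pt \<Rightarrow> 3 \<Rightarrow> 3 \<Rightarrow> 3 \<Rightarrow> real" where
  "cotton g x a b c = - (nablaPhi g x b c a - nablaPhi g x c b a)
     + (g x a b * pd c (Sc g) x - g x a c * pd b (Sc g) x)"

definition gC :: "(pt \<Rightarrow> 3 \<Rightarrow> 3 \<Rightarrow> real) \<Rightarrow> pt \<Rightarrow> complex^3 \<Rightarrow> complex^3 \<Rightarrow> complex" where
  "gC g x u v = (\<Sum>a\<in>UNIV. \<Sum>b\<in>UNIV. complex_of_real (g x a b) * u $ a * v $ b)"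

definition PhiC :: "(pt \<Rightarrow> 3 \<Rightarrow> 3 \<Rightarrow> real) \<Rightarrow> pt \<Rightarrow> complex^3 \<Rightarrow> complex^3 \<Rightarrow> complex" where
  "PhiC g x u v = (\<Sum>a\<in>UNIV. \<Sum>b\<in>UNIV. complex_of_real (Phi g x a b) * u $ a * v $ b)"

definition covD :: "(pt \<Rightarrow> 3 \<Rightarrow> 3 \<Rightarrow> real) \<Rightarrow> (pt \<Rightarrow> complex^3) \<Rightarrow> (pt \<Rightarrow> complex^3) \<Rightarrow> pt \<Rightarrow> complex^3" where
  "covD g X Y x = (\<chi> c. \<Sum>a\<in>UNIV. X x $ a *
      (pd a (\<lambda>y. Y y $ c) x + (\<Sum>b\<in>UNIV. complex_of_real (chr g x c a b) * Y x $ b)))"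

definition vfield :: "pt set \<Rightarrow> (pt \<Rightarrow> complex^3) \<Rightarrow> bool" where
  "vfield U X \<longleftrightarrow> (\<forall>c. smooth_on U (\<lambda>y. X y $ c))"

definition null_generator :: "pt set \<Rightarrow> (pt \<Rightarrow> 3 \<Rightarrow> 3 \<Rightarrow> real) \<Rightarrow> (pt \<Rightarrow> complex^3) \<Rightarrow> bool" where
  "null_generator U g k \<longleftrightarrow> vfield U k \<and> (\<forall>x\<in>U. k x \<noteq> 0 \<and> gC g x (k x) (k x) = 0)"

text \<open>Co-geodetic: g(nabla_X Y, Z) = 0 for all sections X, Y of N-perp and Z of N,
where N is the line bundle spanned by the generator k.\<close>
definition co_geodetic :: "pt set \<Rightarrow> (pt \<Rightarrow> 3 \<Rightarrow> 3 \<Rightarrow> real) \<Rightarrow> (pt \<Rightarrow> complex^3) \<Rightarrow> bool" where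
  "co_geodetic U g k \<longleftrightarrow>
     (\<forall>X Y Z. vfield U X \<and> vfield U Y \<and> vfield U Z \<and>
        (\<forall>x\<in>U. gC g x (X x) (k x) = 0) \<and> (\<forall>x\<in>U. gC g x (Y x) (k x) = 0) \<and>
        (\<forall>x\<in>U. \<exists>c. Z x = c *s k x)
      \<longrightarrow> (\<forall>x\<in>U. gC g x (covD g X Y x) (Z x) = 0))"

definition null_frame :: "(pt \<Rightarrow> 3 \<Rightarrow> 3 \<Rightarrow> real) \<Rightarrow> pt \<Rightarrow> complex^3 \<Rightarrow> complex^3 \<Rightarrow> complex^3 \<Rightarrow> bool" where
  "null_frame g x k l n \<longleftrightarrow>
     gC g x k k = 0 \<and> gC g x l l = 0 \<and> gC g x k l = 1 \<and>
     gC g x k n = 0 \<and> gC g x l n = 0 \<and> gC g x n n = - 1/2"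

text \<open>Phi is of type D at x with the null directions spanned by k and l as its two
(double) principal null structures: after normalising l so that g(k,l)=1, in a null frame
(k,l,n) one has Phi_0 = Phi_1 = Phi_3 = Phi_4 = 0 and Phi_2 nonzero.\<close>
definition typeD_at :: "(pt \<Rightarrow> 3 \<Rightarrow> 3 \<Rightarrow> real) \<Rightarrow> pt \<Rightarrow> complex^3 \<Rightarrow> complex^3 \<Rightarrow> bool" where
  "typeD_at g x k l \<longleftrightarrow> gC g x k l \<noteq> 0 \<and>
     (let l' = (1 / gC g x k l) *s l in
      \<exists>n. null_frame g x k l' n \<and>
        PhiC g x k k / 2 = 0 \<and> PhiC g x k n / 2 = 0 \<and> PhiC g x l' n / 2 = 0 \<and>
        PhiC g x l' l' / 2 = 0 \<and> PhiC g x k l' / 2 \<noteq> 0)"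

end

theory Submission
  imports Defs
begin

text \<open>In a null frame \<open>(k, l, n)\<close> adapted to the type D structure, \<open>\<Phi>\<^sub>a\<^sub>b\<close> acts on \<open>k\<close> and
  \<open>l\<close> by an eigenvalue \<open>\<alpha>\<close> and on \<open>n\<close> by \<open>-2\<alpha>\<close>. Differentiating \<open>\<Phi>\<^sub>a\<^sub>b k\<^sup>b = \<alpha> g\<^sub>a\<^sub>b k\<^sup>b\<close>
  covariantly and contracting the Cotton condition with \<open>n\<close> and \<open>l\<close> gives
  \<open>g(n, \<nabla>\<^sub>k k) = 0\<close> and \<open>k(\<alpha>) = 2 k(S)\<close>. Contracting the identity
  \<open>\<nabla>\<^sup>a\<Phi>\<^sub>a\<^sub>b = 2 \<nabla>\<^sub>b S\<close> (the contracted Bianchi identity) with \<open>k\<close> then yields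
  \<open>g(n, \<nabla>\<^sub>n k) = 0\<close>. Since also \<open>g(k, \<nabla> k) = 0\<close>, the quantity \<open>g(\<nabla>\<^sub>X Y, k) = - g(Y, \<nabla>\<^sub>X k)\<close>
  vanishes for all \<open>X, Y\<close> in \<open>span(k, n) = k\<^sup>\<perp>\<close>. Exchanging \<open>k\<close> and \<open>l\<close> gives the claim for \<open>l\<close>.\<close>

section \<open>Partial derivatives\<close>

lemma pd_has_derivative:
  assumes "(f has_derivative f') (at x)"
  shows "pd i f x = f' (axis i 1)"
proof -
  have line: "((\<lambda>t::real. x + t *\<^sub>R axis i 1) has_derivative (\<lambda>t. t *\<^sub>R axis i 1)) (at 0)"
    by (auto intro!: derivative_eq_intros)
  have "((\<lambda>t::real. f (x + t *\<^sub>R axis i 1)) has_derivative (\<lambda>t. f' (t *\<^sub>R axis i 1))) (at 0)"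
    using diff_chain_at[OF line] assms by (simp add: o_def)
  moreover have "(\<lambda>t. f' (t *\<^sub>R axis i 1)) = (\<lambda>t. t *\<^sub>R f' (axis i 1))"
    using assms by (simp add: has_derivative_def linear_simps(5) linear_cmul)
  ultimately have "((\<lambda>t::real. f (x + t *\<^sub>R axis i 1)) has_vector_derivative f' (axis i 1)) (at 0)"
    by (simp add: has_vector_derivative_def)
  then show ?thesis unfolding pd_def by (rule vector_derivative_at)
qed

lemma pd_eq_frechet_derivative:
  assumes "f differentiable (at x)"
  shows "pd i f x = frechet_derivative f (at x) (axis i 1)"
  using assms frechet_derivative_works pd_has_derivative by blast

lemma pd_add:
  assumes "f differentiable (at x)" "h differentiable (at x)"
  shows "pd i (\<lambda>y. f y + h y) x = pd i f x + pd i h x"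
  using has_derivative_add[OF assms[unfolded frechet_derivative_works]]
  by (simp add: pd_has_derivative pd_eq_frechet_derivative assms)

lemma pd_diff:
  assumes "f differentiable (at x)" "h differentiable (at x)"
  shows "pd i (\<lambda>y. f y - h y) x = pd i f x - pd i h x"
  using has_derivative_diff[OF assms[unfolded frechet_derivative_works]]
  by (simp add: pd_has_derivative pd_eq_frechet_derivative assms)

lemma pd_mult:
  fixes f h :: "pt \<Rightarrow> 'a::real_normed_algebra"
  assumes "f differentiable (at x)" "h differentiable (at x)"
  shows "pd i (\<lambda>y. f y * h y) x = pd i f x * h x + f x * pd i h x"
  using has_derivative_mult[OF assms[unfolded frechet_derivative_works]]
  by (simp add: pd_has_derivative pd_eq_frechet_derivative assms)

lemma pd_const: "pd i (\<lambda>y. c) x = 0"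
  using pd_has_derivative[OF has_derivative_const[of c "at x"], of i] by simp

lemma pd_divide_const:
  fixes f :: "pt \<Rightarrow> real"
  assumes "f differentiable (at x)"
  shows "pd i (\<lambda>y. f y / c) x = pd i f x / c"
  using pd_mult[OF assms differentiable_const[of "1/c"], of i] by (simp add: pd_const)

lemma pd_sum:
  assumes "finite A" "\<And>a. a \<in> A \<Longrightarrow> f a differentiable (at x)"
  shows "pd i (\<lambda>y. \<Sum>a\<in>A. f a y) x = (\<Sum>a\<in>A. pd i (f a) x)"
proof -
  have "((\<lambda>y. \<Sum>a\<in>A. f a y) has_derivative (\<lambda>h. \<Sum>a\<in>A. frechet_derivative (f a) (at x) h)) (at x)"
    using assms by (intro has_derivative_sum) (simp add: frechet_derivative_works[symmetric])
  then show ?thesis using assms by (simp add: pd_has_derivative pd_eq_frechet_derivative)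
qed

lemma pd_inverse:
  fixes f :: "pt \<Rightarrow> 'a::real_normed_div_algebra"
  assumes "f differentiable (at x)" "f x \<noteq> 0"
  shows "pd i (\<lambda>y. inverse (f y)) x = - (inverse (f x) * pd i f x * inverse (f x))"
  using Deriv.has_derivative_inverse[OF assms(2) assms(1)[unfolded frechet_derivative_works]]
  by (simp add: pd_has_derivative pd_eq_frechet_derivative assms)

lemma pd_of_real:
  fixes f :: "pt \<Rightarrow> real"
  assumes "f differentiable (at x)"
  shows "pd i (\<lambda>y. (of_real (f y) :: 'a::real_normed_algebra_1)) x = of_real (pd i f x)"
  using pd_has_derivative[OF bounded_linear.has_derivative[OF bounded_linear_of_real
      assms[unfolded frechet_derivative_works]]] pd_eq_frechet_derivative[OF assms] by simp

lemma differentiable_of_real: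
  fixes f :: "pt \<Rightarrow> real"
  assumes "f differentiable (at x)"
  shows "(\<lambda>y. (of_real (f y) :: 'a::real_normed_algebra_1)) differentiable (at x)"
  using bounded_linear.has_derivative[OF bounded_linear_of_real assms[unfolded frechet_derivative_works]]
  unfolding differentiable_def by blast

lemma pd_cong_open:
  assumes "open U" "x \<in> U" "\<And>y. y \<in> U \<Longrightarrow> f y = h y" "f differentiable (at x)"
  shows "pd i f x = pd i h x"
proof -
  have "(h has_derivative frechet_derivative f (at x)) (at x)"
    using has_derivative_transform_within_open[OF assms(4)[unfolded frechet_derivative_works] assms(1,2)]
      assms(3) by blast
  then show ?thesis using assms by (simp add: pd_has_derivative pd_eq_frechet_derivative)
qed

lemma pd_eq_0_on_open:
  assumes "open U" "x \<in> U" "\<And>y. y \<in> U \<Longrightarrow> f y = 0"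
  shows "pd i f x = 0"
  using pd_cong_open[OF assms(1,2), of "\<lambda>y. 0" f i] assms(3) by (simp add: pd_const)

lemma differentiable_on_open_at:
  "f differentiable_on U \<Longrightarrow> open U \<Longrightarrow> x \<in> U \<Longrightarrow> f differentiable (at x)"
  using differentiable_on_eq_differentiable_at by blast

lemma differentiable_on_cong_open:
  assumes "open U" "f differentiable_on U" "\<And>y. y \<in> U \<Longrightarrow> f y = h y"
  shows "h differentiable_on U"
  unfolding differentiable_on_eq_differentiable_at[OF assms(1)]
proof
  fix y assume y: "y \<in> U"
  have "(f has_derivative frechet_derivative f (at y)) (at y)"
    using assms y differentiable_on_open_at frechet_derivative_works by blast
  then have "(h has_derivative frechet_derivative f (at y)) (at y)"
    by (rule has_derivative_transform_within_open[OF _ assms(1) y]) (use assms(3) in auto)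
  then show "h differentiable (at y)" unfolding differentiable_def by blast
qed

lemma smooth_onD:
  assumes "smooth_on U f"
  shows "f differentiable_on U" "smooth_on U (pd i f)"
  using assms by (auto elim: smooth_on.cases)

lemma smooth_on_differentiable_at:
  "open U \<Longrightarrow> smooth_on U f \<Longrightarrow> x \<in> U \<Longrightarrow> f differentiable (at x)"
  using smooth_onD(1) differentiable_on_open_at by blast

text \<open>On an open set, the algebra generated by smooth functions is closed under partial
  derivatives, so it is a coinduction invariant for \<open>smooth_on\<close>.\<close>

inductive smooth_closure :: "pt set \<Rightarrow> (pt \<Rightarrow> real) \<Rightarrow> bool" for U where
  base: "smooth_on U f \<Longrightarrow> smooth_closure U f"
| const: "smooth_closure U (\<lambda>_. c)"
| add: "smooth_closure U f \<Longrightarrow> smooth_closure U h \<Longrightarrow> smooth_closure U (\<lambda>y. f y + h y)"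
| mult: "smooth_closure U f \<Longrightarrow> smooth_closure U h \<Longrightarrow> smooth_closure U (\<lambda>y. f y * h y)"
| inverse: "smooth_closure U f \<Longrightarrow> \<forall>y\<in>U. f y \<noteq> 0 \<Longrightarrow> smooth_closure U (\<lambda>y. inverse (f y))"
| cong: "smooth_closure U f \<Longrightarrow> \<forall>y\<in>U. f y = h y \<Longrightarrow> smooth_closure U h"

lemma smooth_closure_pd:
  assumes "open U" "smooth_closure U f"
  shows "f differentiable_on U \<and> (\<forall>i. smooth_closure U (pd i f))"
  using assms(2)
proof induction
  case (base f)
  then show ?case by (auto intro: smooth_closure.base dest: smooth_onD)
next
  case (const c)
  then show ?case by (auto simp: pd_const intro: smooth_closure.const)
next
  case (add f h)
  have "smooth_closure U (pd i (\<lambda>y. f y + h y))" for i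
  proof (rule smooth_closure.cong)
    show "smooth_closure U (\<lambda>y. pd i f y + pd i h y)"
      using add by (auto intro: smooth_closure.add)
    show "\<forall>y\<in>U. pd i f y + pd i h y = pd i (\<lambda>y. f y + h y) y"
      using add assms(1) by (auto simp: pd_add differentiable_on_open_at)
  qed
  then show ?case using add by (auto intro: differentiable_on_add)
next
  case (mult f h)
  have "smooth_closure U (pd i (\<lambda>y. f y * h y))" for i
  proof (rule smooth_closure.cong)
    show "smooth_closure U (\<lambda>y. pd i f y * h y + f y * pd i h y)"
      using mult by (intro smooth_closure.add smooth_closure.mult) auto
    show "\<forall>y\<in>U. pd i f y * h y + f y * pd i h y = pd i (\<lambda>y. f y * h y) y"
      using mult assms(1) by (auto simp: pd_mult differentiable_on_open_at)
  qed
  then show ?case using mult by (auto intro: differentiable_on_mult)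
next
  case (inverse f)
  have "smooth_closure U (pd i (\<lambda>y. inverse (f y)))" for i
  proof (rule smooth_closure.cong)
    show "smooth_closure U (\<lambda>y. (-1) * (inverse (f y) * pd i f y * inverse (f y)))"
      using inverse by (intro smooth_closure.mult smooth_closure.const smooth_closure.inverse) auto
    show "\<forall>y\<in>U. (-1) * (inverse (f y) * pd i f y * inverse (f y)) = pd i (\<lambda>y. inverse (f y)) y"
      using inverse assms(1) by (auto simp: pd_inverse differentiable_on_open_at)
  qed
  moreover have "(\<lambda>y. inverse (f y)) differentiable_on U"
    using inverse by (auto simp: differentiable_on_def intro!: differentiable_inverse)
  ultimately show ?case by auto
next
  case (cong f h)
  have "h differentiable_on U"
    using differentiable_on_cong_open[OF assms(1)] cong by blast
  moreover have "smooth_closure U (pd i h)" for i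
  proof (rule smooth_closure.cong)
    show "smooth_closure U (pd i f)" using cong by auto
    show "\<forall>y\<in>U. pd i f y = pd i h y"
      using cong assms(1) by (auto intro!: pd_cong_open[OF assms(1)] simp: differentiable_on_open_at)
  qed
  ultimately show ?case by auto
qed

lemma smooth_closure_imp_smooth_on:
  assumes "open U" "smooth_closure U f"
  shows "smooth_on U f"
  using assms(2)
proof (coinduction arbitrary: f)
  case (smooth_on f)
  then show ?case using smooth_closure_pd[OF assms(1) smooth_on] by auto
qed

context
  fixes U :: "pt set"
  assumes U: "open U"
begin

lemma smooth_on_const: "smooth_on U (\<lambda>_. c :: real)"
  by (rule smooth_closure_imp_smooth_on[OF U smooth_closure.const])

lemma smooth_on_add:
  fixes f h :: "pt \<Rightarrow> real"
  shows "smooth_on U f \<Longrightarrow> smooth_on U h \<Longrightarrow> smooth_on U (\<lambda>y. f y + h y)"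
  by (rule smooth_closure_imp_smooth_on[OF U]) (intro smooth_closure.add smooth_closure.base)

lemma smooth_on_mult:
  fixes f h :: "pt \<Rightarrow> real"
  shows "smooth_on U f \<Longrightarrow> smooth_on U h \<Longrightarrow> smooth_on U (\<lambda>y. f y * h y)"
  by (rule smooth_closure_imp_smooth_on[OF U]) (intro smooth_closure.mult smooth_closure.base)

lemma smooth_on_cong:
  fixes f h :: "pt \<Rightarrow> real"
  shows "smooth_on U f \<Longrightarrow> (\<And>y. y \<in> U \<Longrightarrow> f y = h y) \<Longrightarrow> smooth_on U h"
  by (rule smooth_closure_imp_smooth_on[OF U], rule smooth_closure.cong[OF smooth_closure.base]) auto

lemma smooth_on_diff:
  fixes f h :: "pt \<Rightarrow> real"
  assumes "smooth_on U f" "smooth_on U h"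
  shows "smooth_on U (\<lambda>y. f y - h y)"
proof -
  have "smooth_on U (\<lambda>y. f y + (- 1) * h y)"
    by (intro smooth_on_add smooth_on_mult smooth_on_const assms)
  then show ?thesis by (rule smooth_on_cong) simp
qed

lemma smooth_on_divide:
  fixes f h :: "pt \<Rightarrow> real"
  assumes "smooth_on U f" "smooth_on U h" "\<And>y. y \<in> U \<Longrightarrow> h y \<noteq> 0"
  shows "smooth_on U (\<lambda>y. f y / h y)"
proof -
  have "smooth_on U (\<lambda>y. f y * inverse (h y))"
    using assms smooth_closure.mult[OF smooth_closure.base smooth_closure.inverse[OF smooth_closure.base]]
    by (intro smooth_closure_imp_smooth_on[OF U]) auto
  then show ?thesis by (rule smooth_on_cong) (simp add: divide_inverse)
qed

lemma smooth_on_sum: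
  fixes f :: "'a \<Rightarrow> pt \<Rightarrow> real"
  shows "finite A \<Longrightarrow> (\<And>a. a \<in> A \<Longrightarrow> smooth_on U (f a)) \<Longrightarrow> smooth_on U (\<lambda>y. \<Sum>a\<in>A. f a y)"
proof (induction A rule: finite_induct)
  case empty
  then show ?case using smooth_on_const[of 0] by simp
next
  case (insert a A)
  then show ?case using smooth_on_add[of "f a" "\<lambda>y. \<Sum>a\<in>A. f a y"] by simp
qed

end

section \<open>Symmetry of second partial derivatives\<close>

lemma pd_line_has_real_derivative:
  fixes f :: "pt \<Rightarrow> real"
  assumes "f differentiable (at (y + s *\<^sub>R axis i 1))"
  shows "((\<lambda>t. f (y + t *\<^sub>R axis i 1)) has_real_derivative pd i f (y + s *\<^sub>R axis i 1)) (at s)"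
proof -
  let ?f' = "frechet_derivative f (at (y + s *\<^sub>R axis i 1))"
  have f': "(f has_derivative ?f') (at (y + s *\<^sub>R axis i 1))"
    using assms frechet_derivative_works by blast
  have line: "((\<lambda>t::real. y + t *\<^sub>R axis i 1) has_derivative (\<lambda>t. t *\<^sub>R axis i 1)) (at s)"
    by (auto intro!: derivative_eq_intros)
  have "((\<lambda>t. f (y + t *\<^sub>R axis i 1)) has_derivative (\<lambda>t. ?f' (t *\<^sub>R axis i 1))) (at s)"
    using diff_chain_at[OF line f'] by (simp add: o_def)
  moreover have "(\<lambda>t. ?f' (t *\<^sub>R axis i 1)) = (\<lambda>t. ?f' (axis i 1) * t)"
    using f' by (auto simp: has_derivative_def linear_simps(5) mult.commute)
  ultimately show ?thesis
    using pd_eq_frechet_derivative[OF assms, of i] by (simp add: has_field_derivative_def)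
qed

lemma second_difference_mvt:
  fixes f :: "pt \<Rightarrow> real"
  assumes h: "0 < h"
    and square: "\<And>s t. 0 \<le> s \<Longrightarrow> s \<le> h \<Longrightarrow> 0 \<le> t \<Longrightarrow> t \<le> h \<Longrightarrow>
      x + s *\<^sub>R axis i 1 + t *\<^sub>R axis j 1 \<in> S"
    and f: "\<And>z. z \<in> S \<Longrightarrow> f differentiable (at z)"
    and fi: "\<And>z. z \<in> S \<Longrightarrow> pd i f differentiable (at z)"
  obtains s t where "0 < s" "s < h" "0 < t" "t < h"
    "f (x + h *\<^sub>R axis i 1 + h *\<^sub>R axis j 1) - f (x + h *\<^sub>R axis i 1) - f (x + h *\<^sub>R axis j 1) + f x
       = h * h * pd j (pd i f) (x + s *\<^sub>R axis i 1 + t *\<^sub>R axis j 1)"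
proof -
  let ?u = "axis i 1 :: pt" and ?v = "axis j 1 :: pt"
  define \<phi> where "\<phi> s = f ((x + h *\<^sub>R ?v) + s *\<^sub>R ?u) - f (x + s *\<^sub>R ?u)" for s
  have "DERIV \<phi> s :> pd i f ((x + h *\<^sub>R ?v) + s *\<^sub>R ?u) - pd i f (x + s *\<^sub>R ?u)"
    if "0 \<le> s" "s \<le> h" for s
  proof -
    have "(x + h *\<^sub>R ?v) + s *\<^sub>R ?u \<in> S" using square[of s h] that h by (simp add: algebra_simps)
    moreover have "x + s *\<^sub>R ?u \<in> S" using square[of s 0] that h by simp
    ultimately show ?thesis unfolding \<phi>_def by (intro DERIV_diff pd_line_has_real_derivative f)
  qed
  from MVT2[OF h this] obtain s where s: "0 < s" "s < h"
    and \<phi>: "\<phi> h - \<phi> 0 = (h - 0) * (pd i f ((x + h *\<^sub>R ?v) + s *\<^sub>R ?u) - pd i f (x + s *\<^sub>R ?u))"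
    by blast
  define \<psi> where "\<psi> t = pd i f ((x + s *\<^sub>R ?u) + t *\<^sub>R ?v)" for t
  have "DERIV \<psi> t :> pd j (pd i f) ((x + s *\<^sub>R ?u) + t *\<^sub>R ?v)" if "0 \<le> t" "t \<le> h" for t
    unfolding \<psi>_def by (intro pd_line_has_real_derivative fi square) (use that s in auto)
  from MVT2[OF h this] obtain t where t: "0 < t" "t < h"
    and \<psi>: "\<psi> h - \<psi> 0 = (h - 0) * pd j (pd i f) ((x + s *\<^sub>R ?u) + t *\<^sub>R ?v)"
    by blast
  have "\<psi> h - \<psi> 0 = pd i f ((x + h *\<^sub>R ?v) + s *\<^sub>R ?u) - pd i f (x + s *\<^sub>R ?u)"
    unfolding \<psi>_def by (simp add: algebra_simps)
  moreover have "\<phi> h - \<phi> 0 = f (x + h *\<^sub>R ?u + h *\<^sub>R ?v) - f (x + h *\<^sub>R ?u) - f (x + h *\<^sub>R ?v) + f x"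
    unfolding \<phi>_def by (simp add: algebra_simps)
  moreover have "(x + h *\<^sub>R ?v) + s *\<^sub>R ?u = x + s *\<^sub>R ?u + h *\<^sub>R ?v" by (simp add: algebra_simps)
  ultimately have "f (x + h *\<^sub>R ?u + h *\<^sub>R ?v) - f (x + h *\<^sub>R ?u) - f (x + h *\<^sub>R ?v) + f x
       = h * h * pd j (pd i f) (x + s *\<^sub>R ?u + t *\<^sub>R ?v)"
    using \<phi> \<psi> by (simp, metis mult.assoc)
  then show ?thesis by (rule that[OF s t])
qed

lemma mixed_partials_close:
  fixes f :: "pt \<Rightarrow> real"
  assumes ball: "ball x r \<subseteq> U" and "0 < d" "d \<le> r" and f: "f differentiable_on U" "open U"
    and fi: "pd i f differentiable_on U" and fj: "pd j f differentiable_on U"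
  obtains p q where "dist p x < d" "dist q x < d" "pd j (pd i f) p = pd i (pd j f) q"
proof -
  define h where "h = d / 3"
  have h: "h > 0" using \<open>0 < d\<close> by (simp add: h_def)
  have near: "dist (x + s *\<^sub>R axis a 1 + t *\<^sub>R axis b 1) x < d"
    if "0 \<le> s" "s \<le> h" "0 \<le> t" "t \<le> h" for s t a b
  proof -
    have "dist (x + s *\<^sub>R axis a 1 + t *\<^sub>R axis b 1) x = norm (s *\<^sub>R (axis a 1::pt) + t *\<^sub>R axis b 1)"
      by (simp add: dist_norm)
    also have "\<dots> \<le> norm (s *\<^sub>R (axis a 1::pt)) + norm (t *\<^sub>R (axis b 1::pt))"
      by (rule norm_triangle_ineq)
    also have "\<dots> < d" using that h by (simp add: h_def)
    finally show ?thesis .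
  qed
  have square: "x + s *\<^sub>R axis a 1 + t *\<^sub>R axis b 1 \<in> ball x r"
    if "0 \<le> s" "s \<le> h" "0 \<le> t" "t \<le> h" for s t a b
    using near[OF that, of a b] \<open>d \<le> r\<close> by (simp add: dist_commute)
  have diff: "\<And>z. z \<in> ball x r \<Longrightarrow> \<phi> differentiable (at z)"
    if "\<phi> differentiable_on U" for \<phi> :: "pt \<Rightarrow> real"
    using that ball f(2) differentiable_on_open_at by blast
  obtain s t where st: "0 < s" "s < h" "0 < t" "t < h" and ij:
    "f (x + h *\<^sub>R axis i 1 + h *\<^sub>R axis j 1) - f (x + h *\<^sub>R axis i 1) - f (x + h *\<^sub>R axis j 1) + f x
       = h * h * pd j (pd i f) (x + s *\<^sub>R axis i 1 + t *\<^sub>R axis j 1)"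
    using second_difference_mvt[OF h square diff[OF f(1)] diff[OF fi]] .
  obtain s' t' where st': "0 < s'" "s' < h" "0 < t'" "t' < h" and ji:
    "f (x + h *\<^sub>R axis j 1 + h *\<^sub>R axis i 1) - f (x + h *\<^sub>R axis j 1) - f (x + h *\<^sub>R axis i 1) + f x
       = h * h * pd i (pd j f) (x + s' *\<^sub>R axis j 1 + t' *\<^sub>R axis i 1)"
    using second_difference_mvt[OF h square diff[OF f(1)] diff[OF fj]] .
  have corner: "x + h *\<^sub>R axis j 1 + h *\<^sub>R axis i 1 = x + h *\<^sub>R axis i 1 + h *\<^sub>R axis j 1"
    by (simp add: algebra_simps)
  have "h * h * pd j (pd i f) (x + s *\<^sub>R axis i 1 + t *\<^sub>R axis j 1)
      = h * h * pd i (pd j f) (x + s' *\<^sub>R axis j 1 + t' *\<^sub>R axis i 1)"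
    using ij ji unfolding corner by linarith
  then have "pd j (pd i f) (x + s *\<^sub>R axis i 1 + t *\<^sub>R axis j 1)
      = pd i (pd j f) (x + s' *\<^sub>R axis j 1 + t' *\<^sub>R axis i 1)"
    using h by simp
  then show ?thesis
    using that near[of s t i j] near[of s' t' j i] st st' by simp
qed

lemma pd_commute:
  fixes f :: "pt \<Rightarrow> real"
  assumes U: "open U" "x \<in> U" and f: "f differentiable_on U"
    and fi: "pd i f differentiable_on U" and fj: "pd j f differentiable_on U"
    and ci: "continuous_on U (pd j (pd i f))" and cj: "continuous_on U (pd i (pd j f))"
  shows "pd j (pd i f) x = pd i (pd j f) x"
proof (rule ccontr)
  let ?A = "pd j (pd i f)" and ?B = "pd i (pd j f)"
  assume ne: "?A x \<noteq> ?B x"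
  define \<epsilon> where "\<epsilon> = \<bar>?A x - ?B x\<bar> / 2"
  have \<epsilon>: "\<epsilon> > 0" using ne by (simp add: \<epsilon>_def)
  obtain dA where dA: "dA > 0" "\<And>z. dist z x < dA \<Longrightarrow> dist (?A z) (?A x) < \<epsilon>"
    using ci U \<epsilon> unfolding continuous_on_eq_continuous_at[OF U(1)] continuous_at_eps_delta
    by metis
  obtain dB where dB: "dB > 0" "\<And>z. dist z x < dB \<Longrightarrow> dist (?B z) (?B x) < \<epsilon>"
    using cj U \<epsilon> unfolding continuous_on_eq_continuous_at[OF U(1)] continuous_at_eps_delta
    by metis
  obtain r where r: "r > 0" "ball x r \<subseteq> U" using U open_contains_ball by blast
  define d where "d = min dA (min dB r)"
  have "0 < d" "d \<le> r" using dA dB r by (auto simp: d_def)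
  then obtain p q where "dist p x < d" "dist q x < d" "?A p = ?B q"
    using mixed_partials_close[OF r(2) _ _ f U(1) fi fj] by blast
  then have "\<bar>?A x - ?B x\<bar> < 2 * \<epsilon>" using dA(2)[of p] dB(2)[of q] by (simp add: d_def dist_real_def)
  then show False by (simp add: \<epsilon>_def)
qed

lemma smooth_on_pd_commute:
  fixes f :: "pt \<Rightarrow> real"
  assumes "open U" "x \<in> U" "smooth_on U f"
  shows "pd j (pd i f) x = pd i (pd j f) x"
  using assms smooth_onD differentiable_imp_continuous_on by (intro pd_commute) blast+

definition cyc3 :: "3 \<Rightarrow> 3" where "cyc3 i = (if i = 1 then 2 else if i = 2 then 3 else 1)"

lemma cyc3_simps [simp]: "cyc3 1 = 2" "cyc3 2 = 3" "cyc3 3 = 1"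
  by (auto simp: cyc3_def)

definition adjugate3 :: "real^3^3 \<Rightarrow> real^3^3" where
  "adjugate3 A = (\<chi> i j. A$(cyc3 j)$(cyc3 i) * A$(cyc3 (cyc3 j))$(cyc3 (cyc3 i))
     - A$(cyc3 j)$(cyc3 (cyc3 i)) * A$(cyc3 (cyc3 j))$(cyc3 i))"

lemma matrix_mult_adjugate3: "A ** adjugate3 A = det A *\<^sub>R mat 1"
  unfolding vec_eq_iff matrix_matrix_mult_def adjugate3_def
  by (simp add: forall_3 sum_3 det_3 mat_def) algebra

lemma adjugate3_mult_matrix: "adjugate3 A ** A = det A *\<^sub>R mat 1"
  unfolding vec_eq_iff matrix_matrix_mult_def adjugate3_def
  by (simp add: forall_3 sum_3 det_3 mat_def) algebra

lemma matrix_inv_inverses: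
  fixes A :: "'a::semiring_1^'n^'m"
  assumes "invertible A"
  shows "A ** matrix_inv A = mat 1" "matrix_inv A ** A = mat 1"
proof -
  let ?P = "\<lambda>A'. A ** A' = mat 1 \<and> A' ** A = mat 1"
  obtain M where "?P M" using assms unfolding invertible_def by blast
  then have "?P (matrix_inv A)" unfolding matrix_inv_def by (rule someI)
  then show "A ** matrix_inv A = mat 1" "matrix_inv A ** A = mat 1" by auto
qed

lemma matrix_inv_unique:
  fixes A M :: "'a::comm_ring_1^'n^'n"
  assumes "A ** M = mat 1" "M ** A = mat 1"
  shows "matrix_inv A = M"
proof -
  have inv: "invertible A" using assms unfolding invertible_def by blast
  have "matrix_inv A = matrix_inv A ** (A ** M)"
    by (simp add: assms(1))
  also have "\<dots> = (matrix_inv A ** A) ** M"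
    by (simp add: matrix_mul_assoc)
  finally show ?thesis by (simp add: matrix_inv_inverses(2)[OF inv])
qed

lemma matrix_inv_3:
  fixes A :: "real^3^3"
  assumes "det A \<noteq> 0"
  shows "matrix_inv A = (1 / det A) *\<^sub>R adjugate3 A"
  using assms by (intro matrix_inv_unique)
    (simp_all add: matrix_scalar_ac scalar_matrix_assoc[symmetric] matrix_mult_adjugate3
      adjugate3_mult_matrix)

lemma sum_kronecker [simp]:
  fixes X :: "'n::finite \<Rightarrow> 'a::semiring_1"
  shows "(\<Sum>f\<in>UNIV. (if a = f then 1 else 0) * X f) = X a"
    and "(\<Sum>f\<in>UNIV. (if f = a then 1 else 0) * X f) = X a"
    and "(\<Sum>f\<in>UNIV. X f * (if a = f then 1 else 0)) = X a"
    and "(\<Sum>f\<in>UNIV. X f * (if f = a then 1 else 0)) = X a"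
  by (simp_all add: if_distrib[where f = "\<lambda>z. z * _"] if_distrib[where f = "\<lambda>z. _ * z"] cong: if_cong)

lemma contract_inverse_left:
  fixes K G :: "'n::finite \<Rightarrow> 'n \<Rightarrow> 'a::comm_ring_1"
  assumes "\<And>d. (\<Sum>f\<in>UNIV. K f d * G f b) = (if d = b then 1 else 0)"
  shows "(\<Sum>f\<in>UNIV. (\<Sum>d\<in>UNIV. K f d * X d) * G f b) = X b"
proof -
  have "(\<Sum>f\<in>UNIV. (\<Sum>d\<in>UNIV. K f d * X d) * G f b) = (\<Sum>d\<in>UNIV. X d * (\<Sum>f\<in>UNIV. K f d * G f b))"
    unfolding sum_distrib_right sum_distrib_left by (subst sum.swap) (simp add: mult_ac)
  also have "\<dots> = X b" by (simp add: assms)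
  finally show ?thesis .
qed

lemma contract_inverse_right:
  fixes G H :: "'n::finite \<Rightarrow> 'n \<Rightarrow> 'a::comm_ring_1"
  assumes "\<And>c. (\<Sum>d\<in>UNIV. G c d * H d b) = (if c = b then 1 else 0)"
  shows "(\<Sum>d\<in>UNIV. (\<Sum>c\<in>UNIV. X c * G c d) * H d b) = X b"
proof -
  have "(\<Sum>d\<in>UNIV. (\<Sum>c\<in>UNIV. X c * G c d) * H d b) = (\<Sum>c\<in>UNIV. X c * (\<Sum>d\<in>UNIV. G c d * H d b))"
    unfolding sum_distrib_right sum_distrib_left by (subst sum.swap) (simp add: mult_ac)
  also have "\<dots> = X b" by (simp add: assms)
  finally show ?thesis .
qed

locale metric_chart =
  fixes U :: "pt set" and g :: "pt \<Rightarrow> 3 \<Rightarrow> 3 \<Rightarrow> real"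
  assumes metric: "metric_on U g"
begin

lemma open_U: "open U" using metric by (simp add: metric_on_def)
lemma smooth_g: "smooth_on U (\<lambda>x. g x i j)" using metric by (simp add: metric_on_def)
lemma g_sym: "y \<in> U \<Longrightarrow> g y i j = g y j i" using metric by (simp add: metric_on_def)
lemma det_g_nonzero: "y \<in> U \<Longrightarrow> det (\<chi> i j. g y i j) \<noteq> 0" using metric by (simp add: metric_on_def)

lemma differentiable_g: "y \<in> U \<Longrightarrow> (\<lambda>x. g x i j) differentiable (at y)"
  using smooth_on_differentiable_at[OF open_U smooth_g] .

lemma ginv_explicit:
  assumes "y \<in> U"
  shows "ginv g y i j =
    (g y (cyc3 j) (cyc3 i) * g y (cyc3 (cyc3 j)) (cyc3 (cyc3 i))
       - g y (cyc3 j) (cyc3 (cyc3 i)) * g y (cyc3 (cyc3 j)) (cyc3 i)) /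
    (g y 1 1 * g y 2 2 * g y 3 3 + g y 1 2 * g y 2 3 * g y 3 1 + g y 1 3 * g y 2 1 * g y 3 2 -
     g y 1 1 * g y 2 3 * g y 3 2 - g y 1 2 * g y 2 1 * g y 3 3 - g y 1 3 * g y 2 2 * g y 3 1)"
  using matrix_inv_3[OF det_g_nonzero[OF assms]] unfolding ginv_def
  by (simp add: adjugate3_def det_3 divide_inverse mult.commute)

lemma smooth_ginv: "smooth_on U (\<lambda>y. ginv g y i j)"
proof (rule smooth_on_cong[OF open_U])
  show "smooth_on U (\<lambda>y. (g y (cyc3 j) (cyc3 i) * g y (cyc3 (cyc3 j)) (cyc3 (cyc3 i))
       - g y (cyc3 j) (cyc3 (cyc3 i)) * g y (cyc3 (cyc3 j)) (cyc3 i)) /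
    (g y 1 1 * g y 2 2 * g y 3 3 + g y 1 2 * g y 2 3 * g y 3 1 + g y 1 3 * g y 2 1 * g y 3 2 -
     g y 1 1 * g y 2 3 * g y 3 2 - g y 1 2 * g y 2 1 * g y 3 3 - g y 1 3 * g y 2 2 * g y 3 1))"
    using det_g_nonzero
    by (intro smooth_on_divide smooth_on_diff smooth_on_add smooth_on_mult smooth_g open_U)
      (simp_all add: det_3)
qed (simp add: ginv_explicit)

lemma differentiable_ginv: "y \<in> U \<Longrightarrow> (\<lambda>x. ginv g x i j) differentiable (at y)"
  using smooth_on_differentiable_at[OF open_U smooth_ginv] .

lemma g_ginv:
  assumes "y \<in> U"
  shows "(\<Sum>b\<in>UNIV. g y a b * ginv g y b c) = (if a = c then 1 else 0)"
    and ginv_g: "(\<Sum>b\<in>UNIV. ginv g y a b * g y b c) = (if a = c then 1 else 0)"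
proof -
  let ?A = "(\<chi> i j. g y i j) :: real^3^3"
  have inv: "invertible ?A" using det_g_nonzero[OF assms] by (simp add: invertible_det_nz)
  have "(?A ** matrix_inv ?A) $ a $ c = mat 1 $ a $ c" using matrix_inv_inverses(1)[OF inv] by simp
  then show "(\<Sum>b\<in>UNIV. g y a b * ginv g y b c) = (if a = c then 1 else 0)"
    by (simp add: matrix_matrix_mult_def ginv_def mat_def)
  have "(matrix_inv ?A ** ?A) $ a $ c = mat 1 $ a $ c" using matrix_inv_inverses(2)[OF inv] by simp
  then show "(\<Sum>b\<in>UNIV. ginv g y a b * g y b c) = (if a = c then 1 else 0)"
    by (simp add: matrix_matrix_mult_def ginv_def mat_def)
qed

lemma ginv_sym:
  assumes "y \<in> U"
  shows "ginv g y i j = ginv g y j i"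
proof -
  let ?A = "(\<chi> i j. g y i j) :: real^3^3"
  have inv: "invertible ?A" using det_g_nonzero[OF assms] by (simp add: invertible_det_nz)
  have "transpose ?A = ?A" using g_sym[OF assms] by (simp add: transpose_def vec_eq_iff)
  then have "?A ** transpose (matrix_inv ?A) = mat 1" "transpose (matrix_inv ?A) ** ?A = mat 1"
    using arg_cong[OF matrix_inv_inverses(2)[OF inv], of transpose]
      arg_cong[OF matrix_inv_inverses(1)[OF inv], of transpose]
    by (simp_all add: matrix_transpose_mul)
  then have "matrix_inv ?A = transpose (matrix_inv ?A)" by (rule matrix_inv_unique)
  then show ?thesis by (simp add: ginv_def transpose_def vec_eq_iff)
qed

lemma smooth_chr: "smooth_on U (\<lambda>y. chr g y c a b)"
  unfolding chr_def
  by (intro smooth_on_divide smooth_on_sum smooth_on_mult smooth_on_diff smooth_on_add smooth_ginv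
      smooth_onD(2) smooth_g smooth_on_const open_U) auto

lemma pd_g_sym:
  assumes "x \<in> U"
  shows "pd e (\<lambda>y. g y a b) x = pd e (\<lambda>y. g y b a) x"
  by (rule pd_cong_open[OF open_U assms]) (auto simp: g_sym differentiable_g assms)

lemma chr_sym: "y \<in> U \<Longrightarrow> chr g y c a b = chr g y c b a"
  unfolding chr_def using pd_g_sym[of y] by (simp add: algebra_simps)

lemma pd_g_chr:
  assumes x: "x \<in> U"
  shows "pd e (\<lambda>y. g y a b) x = (\<Sum>f\<in>UNIV. chr g x f e a * g x f b + chr g x f e b * g x a f)"
proof -
  let ?D = "\<lambda>i j k. pd i (\<lambda>y. g y j k) x"
  have inv: "(\<Sum>f\<in>UNIV. ginv g x f d * g x f b) = (if d = b then 1 else 0)" for d b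
    using ginv_g[OF x, of d b] by (simp add: ginv_sym[OF x, of _ d])
  have lower: "(\<Sum>f\<in>UNIV. chr g x f e a * g x f b) = (?D e a b + ?D a e b - ?D b e a) / 2" for a b
  proof -
    have "(\<Sum>f\<in>UNIV. chr g x f e a * g x f b)
        = (\<Sum>f\<in>UNIV. (\<Sum>d\<in>UNIV. ginv g x f d * (?D e a d + ?D a e d - ?D d e a)) * g x f b) / 2"
      unfolding chr_def by (subst sum_divide_distrib, rule sum.cong[OF refl], simp)
    also have "\<dots> = (?D e a b + ?D a e b - ?D b e a) / 2"
      by (subst contract_inverse_left[OF inv]) simp
    finally show ?thesis .
  qed
  show ?thesis
    using lower[of a b] lower[of b a] g_sym[OF x] pd_g_sym[OF x] by (simp add: sum.distrib)
qed

lemma pd_ginv: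
  assumes x: "x \<in> U"
  shows "pd e (\<lambda>y. ginv g y a b) x
    = - (\<Sum>f\<in>UNIV. chr g x a e f * ginv g x f b) - (\<Sum>f\<in>UNIV. chr g x b e f * ginv g x a f)"
proof -
  let ?H = "\<lambda>i j. ginv g x i j" and ?dH = "\<lambda>i j. pd e (\<lambda>y. ginv g y i j) x"
    and ?D = "\<lambda>i j. pd e (\<lambda>y. g y i j) x" and ?G = "\<lambda>i j k. chr g x i j k"
  have product_rule: "(\<Sum>c\<in>UNIV. ?dH a c * g x c d) = - (\<Sum>c\<in>UNIV. ?H a c * ?D c d)" for d
  proof -
    have "pd e (\<lambda>y. if a = d then 1 else 0 :: real) x = pd e (\<lambda>y. \<Sum>c\<in>UNIV. ginv g y a c * g y c d) x"
      by (rule pd_cong_open[OF open_U x]) (auto simp: ginv_g)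
    then have "0 = (\<Sum>c\<in>UNIV. ?dH a c * g x c d + ?H a c * ?D c d)"
      by (simp add: pd_const pd_sum pd_mult differentiable_ginv differentiable_g x)
    then show ?thesis by (simp add: sum.distrib eq_neg_iff_add_eq_0)
  qed
  have "?dH a b = (\<Sum>d\<in>UNIV. (\<Sum>c\<in>UNIV. ?dH a c * g x c d) * ?H d b)"
    by (rule contract_inverse_right[symmetric]) (use g_ginv[OF x] in simp)
  also have "\<dots> = - (\<Sum>d\<in>UNIV. (\<Sum>c\<in>UNIV. ?H a c * ?D c d) * ?H d b)"
    by (simp add: product_rule sum_negf)
  also have "\<dots> = - (\<Sum>d\<in>UNIV. (\<Sum>f\<in>UNIV. (\<Sum>c\<in>UNIV. ?H a c * ?G f e c) * g x f d) * ?H d b)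
                 - (\<Sum>d\<in>UNIV. (\<Sum>f\<in>UNIV. (\<Sum>c\<in>UNIV. ?H a c * g x c f) * ?G f e d) * ?H d b)"
    unfolding pd_g_chr[OF x] unfolding sum_3 by algebra
  also have "(\<Sum>d\<in>UNIV. (\<Sum>f\<in>UNIV. (\<Sum>c\<in>UNIV. ?H a c * ?G f e c) * g x f d) * ?H d b)
      = (\<Sum>c\<in>UNIV. ?H a c * ?G b e c)"
    by (rule contract_inverse_right) (use g_ginv[OF x] in simp)
  also have "(\<Sum>d\<in>UNIV. (\<Sum>f\<in>UNIV. (\<Sum>c\<in>UNIV. ?H a c * g x c f) * ?G f e d) * ?H d b)
      = (\<Sum>d\<in>UNIV. ?G a e d * ?H d b)"
    by (simp add: ginv_g[OF x] sum_distrib_right[symmetric])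
  finally show ?thesis using ginv_sym[OF x] chr_sym[OF x] by (simp add: mult.commute)
qed

end

section \<open>Curvature identities for a 2-jet of Christoffel symbols\<close>

text \<open>Curvature quantities at a point, written in terms of the values \<open>G c a b\<close> of the
  Christoffel symbols \<open>\<Gamma>\<^sup>c\<^sub>a\<^sub>b\<close> and of their first and second partial
  derivatives \<open>P e c a b\<close> and \<open>Q f e c a b\<close>; the Bianchi identities then become
  polynomial identities. Derivatives of the metric and of its inverse are expressed through
  metric compatibility.\<close>

type_synonym jet3 = "3 \<Rightarrow> 3 \<Rightarrow> 3 \<Rightarrow> real"
type_synonym jet4 = "3 \<Rightarrow> 3 \<Rightarrow> 3 \<Rightarrow> 3 \<Rightarrow> real"
type_synonym jet5 = "3 \<Rightarrow> 3 \<Rightarrow> 3 \<Rightarrow> 3 \<Rightarrow> 3 \<Rightarrow> real"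

definition riem_jet :: "jet3 \<Rightarrow> jet4 \<Rightarrow> jet4" where
  "riem_jet G P a b d c =
     P a c b d - P b c a d + (\<Sum>e\<in>UNIV. G c a e * G e b d - G c b e * G e a d)"

definition riem_deriv_jet :: "jet3 \<Rightarrow> jet4 \<Rightarrow> jet5 \<Rightarrow> jet5" where
  "riem_deriv_jet G P Q e a b d c = Q e a c b d - Q e b c a d +
     (\<Sum>h\<in>UNIV. P e c a h * G h b d + G c a h * P e h b d - P e c b h * G h a d - G c b h * P e h a d)"

definition riem_cov_jet :: "jet3 \<Rightarrow> jet4 \<Rightarrow> jet5 \<Rightarrow> jet5" where
  "riem_cov_jet G P Q e a b d c = riem_deriv_jet G P Q e a b d c +
     (\<Sum>f\<in>UNIV. G c e f * riem_jet G P a b d f - G f e a * riem_jet G P f b d c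
        - G f e b * riem_jet G P a f d c - G f e d * riem_jet G P a b f c)"

definition ric_jet :: "jet3 \<Rightarrow> jet4 \<Rightarrow> 3 \<Rightarrow> 3 \<Rightarrow> real" where
  "ric_jet G P a d = (\<Sum>c\<in>UNIV. riem_jet G P a c d c)"

definition ric_deriv_jet :: "jet3 \<Rightarrow> jet4 \<Rightarrow> jet5 \<Rightarrow> jet3" where
  "ric_deriv_jet G P Q e a d = (\<Sum>c\<in>UNIV. riem_deriv_jet G P Q e a c d c)"

definition ric_cov_jet :: "jet3 \<Rightarrow> jet4 \<Rightarrow> jet5 \<Rightarrow> jet3" where
  "ric_cov_jet G P Q e a d = ric_deriv_jet G P Q e a d
     - (\<Sum>f\<in>UNIV. G f e a * ric_jet G P f d) - (\<Sum>f\<in>UNIV. G f e d * ric_jet G P a f)"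

definition ginv_deriv_jet :: "jet3 \<Rightarrow> (3 \<Rightarrow> 3 \<Rightarrow> real) \<Rightarrow> jet3" where
  "ginv_deriv_jet G H m a b = - (\<Sum>f\<in>UNIV. G a m f * H f b) - (\<Sum>f\<in>UNIV. G b m f * H a f)"

definition scal_deriv_jet :: "jet3 \<Rightarrow> jet4 \<Rightarrow> jet5 \<Rightarrow> (3 \<Rightarrow> 3 \<Rightarrow> real) \<Rightarrow> 3 \<Rightarrow> real" where
  "scal_deriv_jet G P Q H m =
     (\<Sum>b\<in>UNIV. \<Sum>d\<in>UNIV. ginv_deriv_jet G H m b d * ric_jet G P b d + H b d * ric_deriv_jet G P Q m b d)"

definition riem_trace_jet :: "jet3 \<Rightarrow> jet4 \<Rightarrow> (3 \<Rightarrow> 3 \<Rightarrow> real) \<Rightarrow> 3 \<Rightarrow> 3 \<Rightarrow> real" where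
  "riem_trace_jet G P H a c = (\<Sum>e\<in>UNIV. \<Sum>d\<in>UNIV. H e d * riem_jet G P e a d c)"

definition riem_trace_deriv_jet :: "jet3 \<Rightarrow> jet4 \<Rightarrow> jet5 \<Rightarrow> (3 \<Rightarrow> 3 \<Rightarrow> real) \<Rightarrow> jet3" where
  "riem_trace_deriv_jet G P Q H m a c = (\<Sum>e\<in>UNIV. \<Sum>d\<in>UNIV.
     ginv_deriv_jet G H m e d * riem_jet G P e a d c + H e d * riem_deriv_jet G P Q m e a d c)"

definition riem_lower_jet :: "jet3 \<Rightarrow> jet4 \<Rightarrow> (3 \<Rightarrow> 3 \<Rightarrow> real) \<Rightarrow> jet4" where
  "riem_lower_jet G P g0 a b d f = (\<Sum>c\<in>UNIV. g0 f c * riem_jet G P a b d c)"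

definition g_deriv_jet :: "jet3 \<Rightarrow> (3 \<Rightarrow> 3 \<Rightarrow> real) \<Rightarrow> jet3" where
  "g_deriv_jet G g0 f h b = (\<Sum>k\<in>UNIV. G k f h * g0 k b + G k f b * g0 h k)"

definition g_second_deriv_jet :: "jet3 \<Rightarrow> jet4 \<Rightarrow> (3 \<Rightarrow> 3 \<Rightarrow> real) \<Rightarrow> jet4" where
  "g_second_deriv_jet G P g0 a b d f = (\<Sum>h\<in>UNIV. P a h b d * g0 h f + G h b d * g_deriv_jet G g0 a h f
     + P a h b f * g0 d h + G h b f * g_deriv_jet G g0 a d h)"

lemma pair_symmetry:
  fixes T :: jet4
  assumes a12: "\<And>a b c d. T a b c d = - T b a c d"
    and a34: "\<And>a b c d. T a b c d = - T a b d c"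
    and cyc: "\<And>a b c d. T a b c d + T b c a d + T c a b d = 0"
  shows "T a b c d = T c d a b"
proof -
  have "T a b c d + T b c a d + T c a b d = 0" "T b c d a + T c d b a + T d b c a = 0"
    "T c d a b + T d a c b + T a c d b = 0" "T d a b c + T a b d c + T b d a c = 0"
    using cyc by blast+
  moreover have "T b c d a = - T b c a d" "T c d b a = - T c d a b" "T d b c a = - T d b a c"
    "T d a c b = - T d a b c" "T a c d b = - T a c b d" "T a b d c = - T a b c d"
    using a34 by blast+
  moreover have "T d b a c = - T b d a c" "T c a b d = - T a c b d" "T d a b c = - T a d b c"
    "T b c a d = - T c b a d"
    using a12 by blast+
  ultimately show ?thesis using a12[of c b a d] a12[of a d b c] by linarith
qed

locale christoffel_jet =
  fixes G :: jet3 and P :: jet4 and Q :: jet5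
  assumes G_sym: "\<And>c a b. G c a b = G c b a"
    and P_sym: "\<And>e c a b. P e c a b = P e c b a"
    and Q_sym: "\<And>f e c a b. Q f e c a b = Q e f c a b"
begin

lemma second_bianchi_jet:
  "riem_cov_jet G P Q e a b d c + riem_cov_jet G P Q a b e d c + riem_cov_jet G P Q b e a d c = 0"
  unfolding riem_cov_jet_def riem_deriv_jet_def riem_jet_def sum_3
  by (simp only: G_sym[of c] G_sym[of 1] G_sym[of 2] G_sym[of 3] P_sym Q_sym) algebra

lemma first_bianchi_jet: "riem_jet G P a b d c + riem_jet G P b d a c + riem_jet G P d a b c = 0"
  unfolding riem_jet_def sum_3
  by (simp only: G_sym[of c] G_sym[of 1] G_sym[of 2] G_sym[of 3] P_sym)

lemma riem_cov_jet_contract: "(\<Sum>c\<in>UNIV. riem_cov_jet G P Q e a c d c) = ric_cov_jet G P Q e a d"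
  unfolding riem_cov_jet_def ric_cov_jet_def ric_deriv_jet_def ric_jet_def riem_deriv_jet_def
    riem_jet_def sum_3
  by algebra

lemma riem_cov_jet_contract_swap: "(\<Sum>c\<in>UNIV. riem_cov_jet G P Q a c e d c) = - ric_cov_jet G P Q a e d"
  unfolding riem_cov_jet_def ric_cov_jet_def ric_deriv_jet_def ric_jet_def riem_deriv_jet_def
    riem_jet_def sum_3
  by algebra

lemma riem_cov_jet_contract_ginv:
  "(\<Sum>e\<in>UNIV. \<Sum>d\<in>UNIV. H e d * riem_cov_jet G P Q m e a d c) = riem_trace_deriv_jet G P Q H m a c
     + (\<Sum>f\<in>UNIV. G c m f * riem_trace_jet G P H a f) - (\<Sum>f\<in>UNIV. G f m a * riem_trace_jet G P H f c)"
  unfolding riem_cov_jet_def riem_trace_deriv_jet_def riem_trace_jet_def ginv_deriv_jet_def sum_3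
  by algebra

lemma contracted_bianchi_jet:
  assumes H_sym: "\<And>a b. H a b = H b a"
    and trace: "\<And>a c. riem_trace_jet G P H a c = (\<Sum>f\<in>UNIV. H c f * ric_jet G P f a)"
    and trace_deriv: "\<And>m a c. riem_trace_deriv_jet G P Q H m a c
      = (\<Sum>f\<in>UNIV. ginv_deriv_jet G H m c f * ric_jet G P f a + H c f * ric_deriv_jet G P Q m f a)"
    and ric_sym: "\<And>a b. ric_jet G P a b = ric_jet G P b a"
    and ric_deriv_sym: "\<And>m a b. ric_deriv_jet G P Q m a b = ric_deriv_jet G P Q m b a"
  shows "2 * (\<Sum>c\<in>UNIV. \<Sum>e\<in>UNIV. H c e * ric_cov_jet G P Q c e a) = scal_deriv_jet G P Q H a"
proof -
  have "0 = (\<Sum>e\<in>UNIV. \<Sum>d\<in>UNIV. H e d * (\<Sum>c\<in>UNIV.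
      riem_cov_jet G P Q e a c d c + riem_cov_jet G P Q a c e d c + riem_cov_jet G P Q c e a d c))"
    by (simp add: second_bianchi_jet)
  also have "\<dots> = (\<Sum>e\<in>UNIV. \<Sum>d\<in>UNIV. H e d * (\<Sum>c\<in>UNIV. riem_cov_jet G P Q e a c d c))
     + (\<Sum>e\<in>UNIV. \<Sum>d\<in>UNIV. H e d * (\<Sum>c\<in>UNIV. riem_cov_jet G P Q a c e d c))
     + (\<Sum>c\<in>UNIV. (\<Sum>e\<in>UNIV. \<Sum>d\<in>UNIV. H e d * riem_cov_jet G P Q c e a d c))"
    unfolding sum_3 by algebra
  also have "\<dots> = (\<Sum>e\<in>UNIV. \<Sum>d\<in>UNIV. H e d * ric_cov_jet G P Q e a d)
     - (\<Sum>e\<in>UNIV. \<Sum>d\<in>UNIV. H e d * ric_cov_jet G P Q a e d)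
     + (\<Sum>c\<in>UNIV. riem_trace_deriv_jet G P Q H c a c
         + (\<Sum>f\<in>UNIV. G c c f * riem_trace_jet G P H a f) - (\<Sum>f\<in>UNIV. G f c a * riem_trace_jet G P H f c))"
    by (simp add: riem_cov_jet_contract riem_cov_jet_contract_swap riem_cov_jet_contract_ginv
        sum_negf sum_subtractf)
  also have "\<dots> = 2 * (\<Sum>c\<in>UNIV. \<Sum>e\<in>UNIV. H c e * ric_cov_jet G P Q c e a) - scal_deriv_jet G P Q H a"
    unfolding trace trace_deriv ric_cov_jet_def scal_deriv_jet_def ginv_deriv_jet_def sum_3
    by (simp only: H_sym ric_sym ric_deriv_sym G_sym) algebra
  finally show ?thesis by linarith
qed

lemma riem_lower_jet_sym_defect:
  assumes "\<And>a b. g0 a b = g0 b a"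
  shows "riem_lower_jet G P g0 a b d f + riem_lower_jet G P g0 a b f d
    = g_second_deriv_jet G P g0 a b d f - g_second_deriv_jet G P g0 b a d f"
  unfolding riem_lower_jet_def g_second_deriv_jet_def g_deriv_jet_def riem_jet_def sum_3
  by (simp only: G_sym[of 1] G_sym[of 2] G_sym[of 3] G_sym[of a] G_sym[of b] G_sym[of d] G_sym[of f]
      P_sym assms) algebra

end

section \<open>Curvature of the metric\<close>

context metric_chart
begin

abbreviation dchr :: "pt \<Rightarrow> jet4" where
  "dchr y \<equiv> \<lambda>e c a b. pd e (\<lambda>z. chr g z c a b) y"

abbreviation ddchr :: "pt \<Rightarrow> jet5" where
  "ddchr y \<equiv> \<lambda>f e c a b. pd f (\<lambda>z. pd e (\<lambda>w. chr g w c a b) z) y"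

lemma smooth_dchr: "smooth_on U (\<lambda>y. pd e (\<lambda>z. chr g z c a b) y)"
  using smooth_onD(2)[OF smooth_chr] by (simp add: eta_contract_eq)

lemma smooth_riem: "smooth_on U (\<lambda>y. riem g y a b d c)"
  unfolding riem_def
  by (intro smooth_on_add smooth_on_diff smooth_on_sum smooth_on_mult smooth_chr smooth_dchr open_U) auto

lemma smooth_ric: "smooth_on U (\<lambda>y. ric g y a b)"
  unfolding ric_def by (intro smooth_on_sum smooth_riem open_U) auto

lemma smooth_scal: "smooth_on U (\<lambda>y. scal g y)"
  unfolding scal_def by (intro smooth_on_sum smooth_on_mult smooth_ric smooth_ginv open_U) auto

lemma smooth_Phi: "smooth_on U (\<lambda>y. Phi g y a b)"
  unfolding Phi_def
  by (intro smooth_on_diff smooth_on_divide smooth_on_mult smooth_ric smooth_scal smooth_g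
      smooth_on_const open_U) auto

lemmas differentiable_curvature =
  smooth_on_differentiable_at[OF open_U smooth_chr]
  smooth_on_differentiable_at[OF open_U smooth_dchr]
  smooth_on_differentiable_at[OF open_U smooth_riem]
  smooth_on_differentiable_at[OF open_U smooth_ric]
  smooth_on_differentiable_at[OF open_U smooth_scal]
  smooth_on_differentiable_at[OF open_U smooth_Phi]
  smooth_on_differentiable_at[OF open_U smooth_onD(2)[OF smooth_g]]
  differentiable_g differentiable_ginv

lemma dchr_sym: "y \<in> U \<Longrightarrow> dchr y e c a b = dchr y e c b a"
  by (rule pd_cong_open[OF open_U]) (auto simp: chr_sym differentiable_curvature)

lemma ddchr_commute: "y \<in> U \<Longrightarrow> ddchr y f e c a b = ddchr y e f c a b"
  using smooth_on_pd_commute[OF open_U _ smooth_chr] by blast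

lemma christoffel_jet_at: "y \<in> U \<Longrightarrow> christoffel_jet (chr g y) (dchr y) (ddchr y)"
  by unfold_locales (auto intro: chr_sym dchr_sym ddchr_commute)

lemma riem_eq_jet: "riem g y a b d c = riem_jet (chr g y) (dchr y) a b d c"
  unfolding riem_def riem_jet_def ..

lemma ric_eq_jet: "ric g y a b = ric_jet (chr g y) (dchr y) a b"
  unfolding ric_def riem_eq_jet by (simp add: ric_jet_def)

lemma pd_riem:
  assumes "x \<in> U"
  shows "pd m (\<lambda>y. riem g y a b d c) x = riem_deriv_jet (chr g x) (dchr x) (ddchr x) m a b d c"
  unfolding riem_def riem_deriv_jet_def using assms
  by (simp add: pd_add pd_diff pd_sum pd_mult differentiable_curvature algebra_simps sum.distrib
      sum_subtractf)

lemma pd_ric: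
  assumes "x \<in> U"
  shows "pd m (\<lambda>y. ric g y a b) x = ric_deriv_jet (chr g x) (dchr x) (ddchr x) m a b"
  unfolding ric_def ric_deriv_jet_def using assms by (simp add: pd_sum differentiable_curvature pd_riem)

lemma pd_ginv_jet:
  assumes "x \<in> U"
  shows "pd m (\<lambda>y. ginv g y a b) x = ginv_deriv_jet (chr g x) (ginv g x) m a b"
  unfolding ginv_deriv_jet_def using pd_ginv[OF assms] .

lemma pd_scal:
  assumes "x \<in> U"
  shows "pd m (scal g) x = scal_deriv_jet (chr g x) (dchr x) (ddchr x) (ginv g x) m"
proof -
  have "scal g = (\<lambda>y. \<Sum>b\<in>UNIV. \<Sum>d\<in>UNIV. ginv g y b d * ric g y b d)"
    by (rule ext) (simp add: scal_def)
  then show ?thesis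
    using assms by (simp add: pd_sum pd_mult differentiable_curvature pd_ric pd_ginv_jet)
      (simp add: scal_deriv_jet_def ric_eq_jet)
qed

lemma pd_pd_g:
  assumes y: "y \<in> U"
  shows "pd a (\<lambda>z. pd b (\<lambda>w. g w d f) z) y = g_second_deriv_jet (chr g y) (dchr y) (g y) a b d f"
proof -
  have "pd a (\<lambda>z. pd b (\<lambda>w. g w d f) z) y
      = pd a (\<lambda>z. \<Sum>h\<in>UNIV. chr g z h b d * g z h f + chr g z h b f * g z d h) y"
    by (rule pd_cong_open[OF open_U y]) (auto simp: pd_g_chr differentiable_curvature y)
  also have "\<dots> = g_second_deriv_jet (chr g y) (dchr y) (g y) a b d f"
    using y by (simp add: pd_add pd_sum pd_mult differentiable_curvature g_second_deriv_jet_def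
        g_deriv_jet_def pd_g_chr algebra_simps sum.distrib)
  finally show ?thesis .
qed

text \<open>Antisymmetry of the lowered curvature tensor in its last pair comes from the symmetry of
  the second partial derivatives of the metric.\<close>

lemma riem_lower_antisym_12: "riem_lower_jet G P g0 a b d f = - riem_lower_jet G P g0 b a d f"
  unfolding riem_lower_jet_def riem_jet_def by (simp add: sum_negf[symmetric] algebra_simps sum_subtractf)

lemma riem_lower_antisym_34:
  assumes y: "y \<in> U"
  shows "riem_lower_jet (chr g y) (dchr y) (g y) a b d f = - riem_lower_jet (chr g y) (dchr y) (g y) a b f d"
proof -
  interpret christoffel_jet "chr g y" "dchr y" "ddchr y" by (rule christoffel_jet_at[OF y])
  have "riem_lower_jet (chr g y) (dchr y) (g y) a b d f + riem_lower_jet (chr g y) (dchr y) (g y) a b f d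
      = pd a (\<lambda>z. pd b (\<lambda>w. g w d f) z) y - pd b (\<lambda>z. pd a (\<lambda>w. g w d f) z) y"
    using riem_lower_jet_sym_defect[of "g y" a b d f] g_sym[OF y] by (simp add: pd_pd_g y)
  also have "\<dots> = 0" using smooth_on_pd_commute[OF open_U y smooth_g] by simp
  finally show ?thesis by simp
qed

lemma riem_lower_cyclic:
  assumes y: "y \<in> U"
  shows "riem_lower_jet (chr g y) (dchr y) (g y) a b d f + riem_lower_jet (chr g y) (dchr y) (g y) b d a f
    + riem_lower_jet (chr g y) (dchr y) (g y) d a b f = 0"
proof -
  interpret christoffel_jet "chr g y" "dchr y" "ddchr y" by (rule christoffel_jet_at[OF y])
  show ?thesis
    unfolding riem_lower_jet_def sum.distrib[symmetric] distrib_left[symmetric]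
    by (simp add: first_bianchi_jet)
qed

lemma riem_lower_pair_sym:
  assumes y: "y \<in> U"
  shows "riem_lower_jet (chr g y) (dchr y) (g y) a b d f = riem_lower_jet (chr g y) (dchr y) (g y) d f a b"
  by (rule pair_symmetry)
    (auto intro: riem_lower_antisym_12 riem_lower_antisym_34[OF y] riem_lower_cyclic[OF y])

lemma riem_raise:
  assumes y: "y \<in> U"
  shows "riem_jet (chr g y) (dchr y) a b d c
    = (\<Sum>f\<in>UNIV. ginv g y c f * riem_lower_jet (chr g y) (dchr y) (g y) a b d f)"
proof -
  have "(\<Sum>f\<in>UNIV. ginv g y c f * riem_lower_jet (chr g y) (dchr y) (g y) a b d f)
     = (\<Sum>e\<in>UNIV. (\<Sum>f\<in>UNIV. ginv g y c f * g y f e) * riem_jet (chr g y) (dchr y) a b d e)"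
    unfolding riem_lower_jet_def sum_3 by algebra
  also have "\<dots> = riem_jet (chr g y) (dchr y) a b d c" by (simp add: ginv_g[OF y])
  finally show ?thesis by simp
qed

lemma ric_sym:
  assumes y: "y \<in> U"
  shows "ric g y a b = ric g y b a"
proof -
  let ?Rl = "riem_lower_jet (chr g y) (dchr y) (g y)"
  have "ric g y a b = (\<Sum>c\<in>UNIV. \<Sum>f\<in>UNIV. ginv g y c f * ?Rl a c b f)"
    unfolding ric_def riem_eq_jet riem_raise[OF y] ..
  also have "\<dots> = (\<Sum>c\<in>UNIV. \<Sum>f\<in>UNIV. ginv g y f c * ?Rl b c a f)"
    by (subst sum.swap) (simp add: riem_lower_pair_sym[OF y, of a _ b])
  also have "\<dots> = ric g y b a"
    unfolding ric_def riem_eq_jet riem_raise[OF y] using ginv_sym[OF y] by simp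
  finally show ?thesis .
qed

lemma riem_trace:
  assumes y: "y \<in> U"
  shows "riem_trace_jet (chr g y) (dchr y) (ginv g y) a c = (\<Sum>f\<in>UNIV. ginv g y c f * ric g y f a)"
proof -
  let ?Rl = "riem_lower_jet (chr g y) (dchr y) (g y)"
  have swap: "?Rl e a d f = ?Rl f d a e" for e a d f
    using riem_lower_pair_sym[OF y, of e a d f] riem_lower_antisym_12[of _ _ _ d f e a]
      riem_lower_antisym_34[OF y, of f d e a] by simp
  show ?thesis
    unfolding riem_trace_jet_def ric_def riem_eq_jet riem_raise[OF y] sum_3
    by (simp only: swap ginv_sym[OF y]) algebra
qed

lemma riem_trace_deriv:
  assumes x: "x \<in> U"
  shows "riem_trace_deriv_jet (chr g x) (dchr x) (ddchr x) (ginv g x) m a c =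
    (\<Sum>f\<in>UNIV. ginv_deriv_jet (chr g x) (ginv g x) m c f * ric g x f a
       + ginv g x c f * ric_deriv_jet (chr g x) (dchr x) (ddchr x) m f a)"
proof -
  have "riem_trace_deriv_jet (chr g x) (dchr x) (ddchr x) (ginv g x) m a c
      = pd m (\<lambda>y. \<Sum>e\<in>UNIV. \<Sum>d\<in>UNIV. ginv g y e d * riem g y e a d c) x"
    unfolding riem_trace_deriv_jet_def using x
    by (simp add: pd_sum pd_mult differentiable_curvature pd_riem pd_ginv_jet) (simp add: riem_eq_jet)
  also have "\<dots> = pd m (\<lambda>y. \<Sum>f\<in>UNIV. ginv g y c f * ric g y f a) x"
    by (rule pd_cong_open[OF open_U x])
      (use x in \<open>auto simp: differentiable_curvature riem_trace[unfolded riem_trace_jet_def riem_eq_jet[symmetric]]\<close>)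
  also have "\<dots> = (\<Sum>f\<in>UNIV. ginv_deriv_jet (chr g x) (ginv g x) m c f * ric g x f a
       + ginv g x c f * ric_deriv_jet (chr g x) (dchr x) (ddchr x) m f a)"
    using x by (simp add: pd_sum pd_mult differentiable_curvature pd_ric pd_ginv_jet)
  finally show ?thesis .
qed

lemma ric_deriv_sym:
  assumes x: "x \<in> U"
  shows "ric_deriv_jet (chr g x) (dchr x) (ddchr x) m a b = ric_deriv_jet (chr g x) (dchr x) (ddchr x) m b a"
proof -
  have "pd m (\<lambda>y. ric g y a b) x = pd m (\<lambda>y. ric g y b a) x"
    by (rule pd_cong_open[OF open_U x]) (auto simp: ric_sym differentiable_curvature x)
  then show ?thesis by (simp add: pd_ric x)
qed

lemma contracted_bianchi:
  assumes x: "x \<in> U"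
  shows "2 * (\<Sum>c\<in>UNIV. \<Sum>e\<in>UNIV. ginv g x c e * ric_cov_jet (chr g x) (dchr x) (ddchr x) c e a)
    = pd a (scal g) x"
proof -
  interpret christoffel_jet "chr g x" "dchr x" "ddchr x" by (rule christoffel_jet_at[OF x])
  show ?thesis unfolding pd_scal[OF x]
  proof (rule contracted_bianchi_jet)
    show "ginv g x a b = ginv g x b a" for a b by (rule ginv_sym[OF x])
    show "riem_trace_jet (chr g x) (dchr x) (ginv g x) a c
        = (\<Sum>f\<in>UNIV. ginv g x c f * ric_jet (chr g x) (dchr x) f a)" for a c
      using riem_trace[OF x] by (simp add: ric_eq_jet)
    show "riem_trace_deriv_jet (chr g x) (dchr x) (ddchr x) (ginv g x) m a c
        = (\<Sum>f\<in>UNIV. ginv_deriv_jet (chr g x) (ginv g x) m c f * ric_jet (chr g x) (dchr x) f a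
           + ginv g x c f * ric_deriv_jet (chr g x) (dchr x) (ddchr x) m f a)" for m a c
      using riem_trace_deriv[OF x] by (simp add: ric_eq_jet)
    show "ric_jet (chr g x) (dchr x) a b = ric_jet (chr g x) (dchr x) b a" for a b
      using ric_sym[OF x] by (simp add: ric_eq_jet)
    show "ric_deriv_jet (chr g x) (dchr x) (ddchr x) m a b
        = ric_deriv_jet (chr g x) (dchr x) (ddchr x) m b a" for m a b
      by (rule ric_deriv_sym[OF x])
  qed
qed

lemma pd_Phi:
  assumes x: "x \<in> U"
  shows "pd c (\<lambda>y. Phi g y a d) x = pd c (\<lambda>y. ric g y a d) x
    - (pd c (scal g) x * g x a d + scal g x * pd c (\<lambda>y. g y a d) x) / 3"
proof -
  have scal_g: "(\<lambda>y. scal g y * g y a d) differentiable (at x)"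
    using x by (intro differentiable_mult) (auto simp: differentiable_curvature)
  have "pd c (\<lambda>y. Phi g y a d) x = pd c (\<lambda>y. ric g y a d - scal g y * g y a d / 3) x"
    unfolding Phi_def ..
  also have "\<dots> = pd c (\<lambda>y. ric g y a d) x - pd c (\<lambda>y. scal g y * g y a d) x / 3"
    using x scal_g by (simp add: pd_diff pd_divide_const differentiable_curvature)
  also have "pd c (\<lambda>y. scal g y * g y a d) x = pd c (scal g) x * g x a d + scal g x * pd c (\<lambda>y. g y a d) x"
    using pd_mult[of "scal g" x "\<lambda>y. g y a d"] x by (simp add: differentiable_curvature eta_contract_eq)
  finally show ?thesis .
qed

lemma nablaPhi_eq_ric_cov:
  assumes x: "x \<in> U"
  shows "nablaPhi g x c a d
    = ric_cov_jet (chr g x) (dchr x) (ddchr x) c a d - pd c (scal g) x * g x a d / 3"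
  unfolding nablaPhi_def pd_Phi[OF x] ric_cov_jet_def pd_ric[OF x, symmetric]
  unfolding pd_g_chr[OF x] Phi_def ric_eq_jet[symmetric]
  by (simp add: algebra_simps sum.distrib sum_subtractf sum_divide_distrib sum_distrib_left)

lemma div_Phi:
  assumes x: "x \<in> U"
  shows "(\<Sum>c\<in>UNIV. \<Sum>a\<in>UNIV. ginv g x c a * nablaPhi g x c a b) = 2 * pd b (Sc g) x"
proof -
  have "Sc g = (\<lambda>y. scal g y / 12)" by (rule ext) (simp add: Sc_def)
  then have dSc: "pd b (Sc g) x = pd b (scal g) x / 12"
    using pd_divide_const[of "scal g" x b 12] x by (simp add: differentiable_curvature eta_contract_eq)
  have "(\<Sum>c\<in>UNIV. \<Sum>a\<in>UNIV. ginv g x c a * nablaPhi g x c a b)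
     = (\<Sum>c\<in>UNIV. \<Sum>e\<in>UNIV. ginv g x c e * ric_cov_jet (chr g x) (dchr x) (ddchr x) c e b)
      - (\<Sum>c\<in>UNIV. pd c (scal g) x * (\<Sum>a\<in>UNIV. ginv g x c a * g x a b)) / 3"
    unfolding nablaPhi_eq_ric_cov[OF x] sum_3 by algebra
  also have "\<dots> = pd b (scal g) x / 2 - pd b (scal g) x / 3"
    using contracted_bianchi[OF x, of b] by (simp add: ginv_g[OF x])
  finally show ?thesis using dSc by simp
qed

end

section \<open>Bilinear forms and null frames\<close>

definition bilin :: "(3 \<Rightarrow> 3 \<Rightarrow> complex) \<Rightarrow> complex^3 \<Rightarrow> complex^3 \<Rightarrow> complex" where
  "bilin M u v = (\<Sum>a\<in>UNIV. \<Sum>b\<in>UNIV. M a b * u $ a * v $ b)"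

lemma bilin_sym: "(\<And>a b. M a b = M b a) \<Longrightarrow> bilin M u v = bilin M v u"
  unfolding bilin_def sum_3 by (simp add: algebra_simps)

lemma bilin_combination_left:
  "bilin M (a *s p + b *s q + c *s r) v = a * bilin M p v + b * bilin M q v + c * bilin M r v"
  unfolding bilin_def sum_3 by (simp add: algebra_simps)

lemma bilin_combination_right:
  "bilin M v (a *s p + b *s q + c *s r) = a * bilin M v p + b * bilin M v q + c * bilin M v r"
  unfolding bilin_def sum_3 by (simp add: algebra_simps)

lemma bilin_diff_left: "bilin M (u - w) v = bilin M u v - bilin M w v"
  unfolding bilin_def sum_3 by (simp add: algebra_simps)

lemma bilin_scale_left: "bilin M (c *s u) v = c * bilin M u v"
  unfolding bilin_def sum_3 by (simp add: algebra_simps)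

lemma bilin_scale_right: "bilin M u (c *s v) = c * bilin M u v"
  unfolding bilin_def sum_3 by (simp add: algebra_simps)

lemma bilin_sum_right:
  fixes v :: "complex^3" and D :: "3 \<Rightarrow> complex^3"
  shows "bilin M w (\<Sum>c\<in>UNIV. v $ c *s D c) = (\<Sum>c\<in>UNIV. v $ c * bilin M w (D c))"
  unfolding bilin_def sum_3 by (simp add: algebra_simps)

lemma bilin_combination_form: "bilin (\<lambda>a d. c * G a d - F a d) w v = c * bilin G w v - bilin F w v"
  unfolding bilin_def sum_3 by (simp add: algebra_simps)

lemma bilin_axis_left: "bilin M (axis a 1) v = (\<Sum>b\<in>UNIV. M a b * v $ b)"
  unfolding bilin_def axis_def sum_3 using exhaust_3[of a] by auto

lemma bilin_congruence_matrix:
  fixes E :: "complex^3^3"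
  shows "(E ** (\<chi> a b. M a b) ** transpose E) $ i $ j = bilin M (E $ i) (E $ j)"
  unfolding bilin_def matrix_matrix_mult_def transpose_def
  by (simp add: sum_distrib_right, subst sum.swap) (simp add: mult_ac)

lemma bilin_matrix_vector:
  fixes E :: "complex^3^3"
  shows "(E *v ((\<chi> a b. M a b) *v w)) $ i = bilin M (E $ i) w"
  unfolding bilin_def matrix_vector_mult_def by (simp add: sum_distrib_left mult_ac)

lemma matrix_vector_eq_0_imp_eq_0:
  fixes A :: "complex^3^3"
  assumes "det A \<noteq> 0" "A *v w = 0"
  shows "w = 0"
proof -
  have "inj ((*v) A)" using assms(1) by (intro inj_matrix_vector_mult) (simp add: invertible_det_nz)
  then show ?thesis using assms(2) by (metis injD matrix_vector_mult_0_right)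
qed

locale null_frame_bilin =
  fixes M :: "3 \<Rightarrow> 3 \<Rightarrow> complex" and k l n :: "complex^3"
  assumes M_sym: "\<And>a b. M a b = M b a"
    and M_det: "det (\<chi> a b. M a b) \<noteq> 0"
    and kk: "bilin M k k = 0" and ll: "bilin M l l = 0" and kl: "bilin M k l = 1"
    and kn: "bilin M k n = 0" and ln: "bilin M l n = 0" and nn: "bilin M n n = - 1/2"
begin

lemma lk: "bilin M l k = 1" by (subst bilin_sym[OF M_sym]) (rule kl)
lemma nk: "bilin M n k = 0" by (subst bilin_sym[OF M_sym]) (rule kn)
lemma nl: "bilin M n l = 0" by (subst bilin_sym[OF M_sym]) (rule ln)

lemmas pairings = kk ll kl kn ln nn lk nk nl

lemma orthogonal_to_frame_eq_0:
  assumes "bilin M w k = 0" "bilin M w l = 0" "bilin M w n = 0"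
  shows "w = 0"
proof -
  let ?E = "vector [k, l, n] :: complex^3^3" and ?G = "(\<chi> a b. M a b) :: complex^3^3"
  have "det (?E ** ?G ** transpose ?E) = 1/2"
    unfolding det_3 bilin_congruence_matrix by (simp add: pairings)
  then have "det ?E * det ?G * det ?E = 1/2" by (simp add: det_mul)
  then have "det ?E \<noteq> 0" by auto
  moreover have "?E *v (?G *v w) = 0"
    unfolding vec_eq_iff forall_3 bilin_matrix_vector
    using assms bilin_sym[OF M_sym, where u = w] by simp
  ultimately have "?G *v w = 0" by (rule matrix_vector_eq_0_imp_eq_0)
  then show "w = 0" by (rule matrix_vector_eq_0_imp_eq_0[OF M_det])
qed

lemma frame_expansion: "u = bilin M u l *s k + bilin M u k *s l + (- 2 * bilin M u n) *s n"
proof -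
  let ?w = "u - (bilin M u l *s k + bilin M u k *s l + (- 2 * bilin M u n) *s n)"
  have "bilin M ?w k = 0" "bilin M ?w l = 0" "bilin M ?w n = 0"
    unfolding bilin_diff_left bilin_combination_left by (simp_all add: pairings)
  then have "?w = 0" by (rule orthogonal_to_frame_eq_0)
  then show ?thesis by simp
qed

lemma bilin_frame_expansion:
  "bilin B u v = bilin M u l * bilin B k v + bilin M u k * bilin B l v - 2 * bilin M u n * bilin B n v"
proof -
  have "bilin B u v = bilin B (bilin M u l *s k + bilin M u k *s l + (- 2 * bilin M u n) *s n) v"
    using frame_expansion[of u] by metis
  then show ?thesis unfolding bilin_combination_left by simp
qed

lemma typeD_form_eigen:
  fixes F :: "3 \<Rightarrow> 3 \<Rightarrow> complex"
  assumes F_sym: "\<And>a b. F a b = F b a"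
    and "bilin F k k = 0" "bilin F k n = 0" "bilin F l n = 0" "bilin F l l = 0"
  shows "bilin F u k = bilin F k l * bilin M u k"
    and "bilin F u l = bilin F k l * bilin M u l"
    and "bilin F u n = - 2 * bilin F n n * bilin M u n"
  using bilin_frame_expansion[of F u k] bilin_frame_expansion[of F u l] bilin_frame_expansion[of F u n]
    assms bilin_sym[of F l k, OF F_sym] bilin_sym[of F n k, OF F_sym] bilin_sym[of F n l, OF F_sym]
  by simp_all

lemma inverse_in_frame:
  assumes inv: "\<And>a d. (\<Sum>c\<in>UNIV. H a c * M c d) = (if a = d then 1 else 0)"
  shows "H a b = l $ a * k $ b + k $ a * l $ b - 2 * n $ a * n $ b"
proof -
  let ?F = "\<lambda>d b. l $ d * k $ b + k $ d * l $ b - 2 * n $ d * n $ b"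
  have delta: "(if b = c then 1 else 0) = (\<Sum>d\<in>UNIV. M c d * ?F d b)" for c b
  proof -
    have "axis c 1 $ b = (bilin M (axis c 1) l *s k + bilin M (axis c 1) k *s l
        + (- 2 * bilin M (axis c 1) n) *s n) $ b"
      using frame_expansion[of "axis c 1"] by metis
    then show ?thesis unfolding bilin_axis_left sum_3 by (simp add: axis_def algebra_simps)
  qed
  have "H a b = (\<Sum>c\<in>UNIV. H a c * (if b = c then 1 else 0))"
    using exhaust_3[of b] by (auto simp: sum_3)
  also have "\<dots> = (\<Sum>d\<in>UNIV. (\<Sum>c\<in>UNIV. H a c * M c d) * ?F d b)"
    unfolding delta sum_3 by (simp add: algebra_simps)
  also have "\<dots> = ?F a b" by (simp add: inv)
  finally show ?thesis .
qed

lemma bilin_perp_vanishes: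
  fixes N :: "complex^3 \<Rightarrow> complex^3"
  assumes N_linear: "\<And>a b c p q r. N (a *s p + b *s q + c *s r) = a *s N p + b *s N q + c *s N r"
    and "\<And>v. bilin M k (N v) = 0" "bilin M n (N k) = 0" "bilin M n (N n) = 0"
    and "bilin M X k = 0" "bilin M Y k = 0"
  shows "bilin M Y (N X) = 0"
proof -
  have "X = bilin M X l *s k + 0 *s l + (- 2 * bilin M X n) *s n"
    "Y = bilin M Y l *s k + 0 *s l + (- 2 * bilin M Y n) *s n"
    using frame_expansion[of X] frame_expansion[of Y] assms(5,6) by simp_all
  then have "bilin M Y (N X) = bilin M (bilin M Y l *s k + 0 *s l + (- 2 * bilin M Y n) *s n)
      (N (bilin M X l *s k + 0 *s l + (- 2 * bilin M X n) *s n))"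
    by simp
  then show ?thesis
    unfolding N_linear bilin_combination_left bilin_combination_right using assms(2-4) by simp
qed

end

context metric_chart
begin

definition g_form :: "pt \<Rightarrow> 3 \<Rightarrow> 3 \<Rightarrow> complex" where
  "g_form y a b = complex_of_real (g y a b)"

definition Phi_form :: "pt \<Rightarrow> 3 \<Rightarrow> 3 \<Rightarrow> complex" where
  "Phi_form y a b = complex_of_real (Phi g y a b)"

definition eigenvalue :: "pt \<Rightarrow> complex^3 \<Rightarrow> complex^3 \<Rightarrow> complex" where
  "eigenvalue y kv lv = PhiC g y kv lv / gC g y kv lv"

lemma gC_eq_bilin: "gC g y u v = bilin (g_form y) u v"
  unfolding gC_def bilin_def g_form_def ..

lemma PhiC_eq_bilin: "PhiC g y u v = bilin (Phi_form y) u v"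
  unfolding PhiC_def bilin_def Phi_form_def ..

lemma Phi_sym: "y \<in> U \<Longrightarrow> Phi g y a b = Phi g y b a"
  unfolding Phi_def using ric_sym g_sym by simp

lemma g_form_sym: "y \<in> U \<Longrightarrow> g_form y a b = g_form y b a"
  unfolding g_form_def using g_sym by simp

lemma Phi_form_sym: "y \<in> U \<Longrightarrow> Phi_form y a b = Phi_form y b a"
  unfolding Phi_form_def using Phi_sym by simp

lemma det_g_form_nonzero: "y \<in> U \<Longrightarrow> det (\<chi> a b. g_form y a b) \<noteq> 0"
proof -
  assume y: "y \<in> U"
  have "det (\<chi> a b. g_form y a b) = complex_of_real (det (\<chi> a b. g y a b))"
    unfolding det_3 g_form_def by simp
  then show ?thesis using det_g_nonzero[OF y] by simp
qed

lemma ginv_g_form: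
  assumes y: "y \<in> U"
  shows "(\<Sum>c\<in>UNIV. complex_of_real (ginv g y a c) * g_form y c d) = (if a = d then 1 else 0)"
proof -
  have "(\<Sum>c\<in>UNIV. complex_of_real (ginv g y a c) * g_form y c d)
      = complex_of_real (\<Sum>c\<in>UNIV. ginv g y a c * g y c d)"
    unfolding g_form_def by simp
  then show ?thesis using ginv_g[OF y] by simp
qed

lemma Phi_trace_free:
  assumes y: "y \<in> U"
  shows "(\<Sum>a\<in>UNIV. \<Sum>b\<in>UNIV. ginv g y a b * Phi g y a b) = 0"
proof -
  have "(\<Sum>a\<in>UNIV. \<Sum>b\<in>UNIV. ginv g y a b * g y a b) = (\<Sum>a\<in>UNIV. \<Sum>b\<in>UNIV. ginv g y a b * g y b a)"
    using g_sym[OF y] by simp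
  also have "\<dots> = 3" by (simp add: ginv_g[OF y] sum_3)
  finally have trace_g: "(\<Sum>a\<in>UNIV. \<Sum>b\<in>UNIV. ginv g y a b * g y a b) = 3" .
  have "(\<Sum>a\<in>UNIV. \<Sum>b\<in>UNIV. ginv g y a b * Phi g y a b)
      = scal g y - scal g y / 3 * (\<Sum>a\<in>UNIV. \<Sum>b\<in>UNIV. ginv g y a b * g y a b)"
    unfolding Phi_def scal_def sum_3 by algebra
  then show ?thesis using trace_g by simp
qed

text \<open>The eigenvalue \<open>-2\<alpha>\<close> on \<open>n\<close> is forced by the trace-freeness of \<open>\<Phi>\<close>.\<close>

lemma typeD_frame:
  assumes y: "y \<in> U" and typeD: "typeD_at g y kv lv"
  defines "l' \<equiv> (1 / gC g y kv lv) *s lv" and "\<alpha> \<equiv> eigenvalue y kv lv"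
  obtains n where "null_frame_bilin (g_form y) kv l' n" "\<alpha> \<noteq> 0"
    "\<And>u. bilin (Phi_form y) u kv = \<alpha> * bilin (g_form y) u kv"
    "\<And>u. bilin (Phi_form y) u l' = \<alpha> * bilin (g_form y) u l'"
    "\<And>u. bilin (Phi_form y) u n = - 2 * \<alpha> * bilin (g_form y) u n"
    "\<And>a b. complex_of_real (ginv g y a b) = l' $ a * kv $ b + kv $ a * l' $ b - 2 * n $ a * n $ b"
proof -
  obtain n where frame: "null_frame g y kv l' n"
    and Phi: "PhiC g y kv kv = 0" "PhiC g y kv n = 0" "PhiC g y l' n = 0"
      "PhiC g y l' l' = 0" "PhiC g y kv l' \<noteq> 0"
    using typeD unfolding typeD_at_def Let_def l'_def by auto
  interpret null_frame_bilin "g_form y" kv l' n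
    using frame unfolding null_frame_def gC_eq_bilin
    by unfold_locales (auto intro: g_form_sym[OF y] simp: det_g_form_nonzero[OF y])
  have F_sym: "\<And>a b. Phi_form y a b = Phi_form y b a" by (rule Phi_form_sym[OF y])
  have \<alpha>: "bilin (Phi_form y) kv l' = \<alpha>"
    unfolding l'_def \<alpha>_def eigenvalue_def bilin_scale_right PhiC_eq_bilin gC_eq_bilin by simp
  note eigen = typeD_form_eigen[OF F_sym Phi(1-4)[unfolded PhiC_eq_bilin]]
  have ginv: "complex_of_real (ginv g y a b) = l' $ a * kv $ b + kv $ a * l' $ b - 2 * n $ a * n $ b"
    for a b by (rule inverse_in_frame) (rule ginv_g_form[OF y])
  have "0 = complex_of_real (\<Sum>a\<in>UNIV. \<Sum>b\<in>UNIV. ginv g y a b * Phi g y a b)"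
    using Phi_trace_free[OF y] by simp
  also have "\<dots> = (\<Sum>a\<in>UNIV. \<Sum>b\<in>UNIV. complex_of_real (ginv g y a b) * Phi_form y a b)"
    unfolding Phi_form_def by simp
  also have "\<dots> = bilin (Phi_form y) l' kv + bilin (Phi_form y) kv l' - 2 * bilin (Phi_form y) n n"
    unfolding ginv bilin_def sum_3 by algebra
  finally have "bilin (Phi_form y) n n = \<alpha>"
    using \<alpha> bilin_sym[of "Phi_form y" l' kv, OF F_sym] by simp
  then have "bilin (Phi_form y) u n = - 2 * \<alpha> * bilin (g_form y) u n" for u
    using eigen(3)[of u] by simp
  moreover have "\<alpha> \<noteq> 0" using Phi(5) \<alpha> unfolding PhiC_eq_bilin by simp
  ultimately show ?thesis
    using that[OF null_frame_bilin_axioms] eigen(1,2)[unfolded \<alpha>] ginv by blast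
qed

lemma typeD_at_swap:
  assumes y: "y \<in> U" and typeD: "typeD_at g y kv lv"
  shows "typeD_at g y lv kv"
proof -
  let ?G = "g_form y" and ?F = "Phi_form y"
  have G_sym: "\<And>u v. bilin ?G u v = bilin ?G v u" using bilin_sym g_form_sym[OF y] by blast
  have F_sym: "\<And>u v. bilin ?F u v = bilin ?F v u" using bilin_sym Phi_form_sym[OF y] by blast
  define c where "c = 1 / bilin ?G kv lv"
  define c' where "c' = 1 / bilin ?G lv kv"
  have kl: "bilin ?G kv lv \<noteq> 0" using typeD by (simp add: typeD_at_def gC_eq_bilin)
  then have "c \<noteq> 0" "c' \<noteq> 0" using G_sym[of lv kv] by (auto simp: c_def c'_def)
  obtain n where frame: "null_frame g y kv (c *s lv) n"
    and Phi: "PhiC g y kv kv = 0" "PhiC g y kv n = 0" "PhiC g y (c *s lv) n = 0"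
      "PhiC g y (c *s lv) (c *s lv) = 0" "PhiC g y kv (c *s lv) \<noteq> 0"
    using typeD unfolding typeD_at_def Let_def c_def gC_eq_bilin by auto
  have G: "bilin ?G kv kv = 0" "bilin ?G lv lv = 0" "bilin ?G kv n = 0" "bilin ?G lv n = 0"
    "bilin ?G n n = - 1/2"
    using frame \<open>c \<noteq> 0\<close> unfolding null_frame_def gC_eq_bilin by (auto simp: bilin_scale_left bilin_scale_right)
  have F: "bilin ?F kv kv = 0" "bilin ?F kv n = 0" "bilin ?F lv n = 0" "bilin ?F lv lv = 0"
    "bilin ?F kv lv \<noteq> 0"
    using Phi \<open>c \<noteq> 0\<close> unfolding PhiC_eq_bilin by (auto simp: bilin_scale_left bilin_scale_right)
  have "null_frame g y lv (c' *s kv) n"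
    unfolding null_frame_def gC_eq_bilin using G kl G_sym[of lv kv] G_sym[of kv n]
    by (simp add: bilin_scale_left bilin_scale_right c'_def)
  moreover have "PhiC g y lv lv = 0" "PhiC g y lv n = 0" "PhiC g y (c' *s kv) n = 0"
    "PhiC g y (c' *s kv) (c' *s kv) = 0" "PhiC g y lv (c' *s kv) \<noteq> 0"
    unfolding PhiC_eq_bilin using F \<open>c' \<noteq> 0\<close> F_sym[of lv kv] by (auto simp: bilin_scale_left bilin_scale_right)
  ultimately show ?thesis
    unfolding typeD_at_def Let_def using kl G_sym[of lv kv] by (auto simp: gC_eq_bilin c'_def)
qed

end

section \<open>Covariant derivatives of the principal null generators\<close>

context metric_chart
begin

definition nabla_coord :: "(pt \<Rightarrow> complex^3) \<Rightarrow> pt \<Rightarrow> 3 \<Rightarrow> complex^3" where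
  "nabla_coord Y x c = (\<chi> b. pd c (\<lambda>y. Y y $ b) x + (\<Sum>e\<in>UNIV. complex_of_real (chr g x b c e) * Y x $ e))"

lemma bilin_covD: "bilin M (covD g X Y x) w = (\<Sum>a\<in>UNIV. X x $ a * bilin M (nabla_coord Y x a) w)"
  unfolding covD_def nabla_coord_def bilin_def sum_3 by (simp add: algebra_simps)

lemma differentiable_g_complex: "y \<in> U \<Longrightarrow> (\<lambda>z. complex_of_real (g z a b)) differentiable (at y)"
  by (rule differentiable_of_real[OF differentiable_g])

lemma differentiable_Phi_complex: "y \<in> U \<Longrightarrow> (\<lambda>z. complex_of_real (Phi g z a b)) differentiable (at y)"
  by (rule differentiable_of_real) (simp add: differentiable_curvature)

lemma pd_gC:
  assumes x: "x \<in> U" and Y: "\<And>b. (\<lambda>y. Y y $ b) differentiable (at x)"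
    and W: "\<And>b. (\<lambda>y. W y $ b) differentiable (at x)"
  shows "pd c (\<lambda>y. gC g y (Y y) (W y)) x
    = bilin (g_form x) (nabla_coord Y x c) (W x) + bilin (g_form x) (Y x) (nabla_coord W x c)"
proof -
  have "pd c (\<lambda>y. gC g y (Y y) (W y)) x = (\<Sum>a\<in>UNIV. \<Sum>b\<in>UNIV.
      (complex_of_real (pd c (\<lambda>y. g y a b) x) * Y x $ a + complex_of_real (g x a b) * pd c (\<lambda>y. Y y $ a) x)
        * W x $ b + complex_of_real (g x a b) * Y x $ a * pd c (\<lambda>y. W y $ b) x)"
    unfolding gC_def using x Y W
    by (simp add: pd_sum pd_mult pd_of_real differentiable_g differentiable_g_complex)
  also have "\<dots> = bilin (g_form x) (nabla_coord Y x c) (W x) + bilin (g_form x) (Y x) (nabla_coord W x c)"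
    unfolding pd_g_chr[OF x] bilin_def nabla_coord_def g_form_def sum_3 by (simp add: algebra_simps)
  finally show ?thesis .
qed

lemma cotton_contraction:
  assumes x: "x \<in> U"
  shows "(\<Sum>a\<in>UNIV. \<Sum>b\<in>UNIV. K $ a * K $ b *
      complex_of_real (cotton g x a b c + 3 * g x b c * pd a (Sc g) x))
    = - (\<Sum>b\<in>UNIV. K $ b * (\<Sum>d\<in>UNIV. complex_of_real (nablaPhi g x b c d) * K $ d))
      + (\<Sum>b\<in>UNIV. K $ b * (\<Sum>d\<in>UNIV. complex_of_real (nablaPhi g x c b d) * K $ d))
      + bilin (g_form x) K K * complex_of_real (pd c (Sc g) x)
      + 2 * (\<Sum>b\<in>UNIV. g_form x c b * K $ b) * (\<Sum>a\<in>UNIV. K $ a * complex_of_real (pd a (Sc g) x))"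
proof -
  have "\<And>a b. g x a b = g x b a" using g_sym[OF x] by blast
  then show ?thesis
    unfolding cotton_def bilin_def g_form_def sum_3 by (simp add: algebra_simps)
qed

lemma vfield_differentiable: "vfield U X \<Longrightarrow> x \<in> U \<Longrightarrow> (\<lambda>y. X y $ c) differentiable (at x)"
  unfolding vfield_def using smooth_on_differentiable_at[OF open_U] by blast

end

locale typeD_generators = metric_chart +
  fixes k l :: "pt \<Rightarrow> complex^3"
  assumes k_generator: "null_generator U g k"
    and l_differentiable: "\<And>y b. y \<in> U \<Longrightarrow> (\<lambda>z. l z $ b) differentiable (at y)"
    and typeD: "\<And>y. y \<in> U \<Longrightarrow> typeD_at g y (k y) (l y)"
begin

definition \<alpha> :: "pt \<Rightarrow> complex" where
  "\<alpha> y = eigenvalue y (k y) (l y)"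

definition nabla_k :: "pt \<Rightarrow> complex^3 \<Rightarrow> complex^3" where
  "nabla_k x v = (\<Sum>c\<in>UNIV. v $ c *s nabla_coord k x c)"

definition dir_deriv_\<alpha> :: "pt \<Rightarrow> complex^3 \<Rightarrow> complex" where
  "dir_deriv_\<alpha> x v = (\<Sum>a\<in>UNIV. v $ a * pd a \<alpha> x)"

definition dir_deriv_S :: "pt \<Rightarrow> complex^3 \<Rightarrow> complex" where
  "dir_deriv_S x v = (\<Sum>a\<in>UNIV. v $ a * complex_of_real (pd a (Sc g) x))"

lemma k_null: "y \<in> U \<Longrightarrow> gC g y (k y) (k y) = 0"
  using k_generator by (simp add: null_generator_def)

lemma k_differentiable: "y \<in> U \<Longrightarrow> (\<lambda>z. k z $ b) differentiable (at y)"
  using k_generator vfield_differentiable by (simp add: null_generator_def)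

lemma \<alpha>_differentiable:
  assumes x: "x \<in> U"
  shows "\<alpha> differentiable (at x)"
proof -
  have "gC g x (k x) (l x) \<noteq> 0" using typeD[OF x] by (simp add: typeD_at_def)
  then have "(\<lambda>y. PhiC g y (k y) (l y) / gC g y (k y) (l y)) differentiable (at x)"
    unfolding PhiC_def gC_def using x
    by (intro differentiable_divide differentiable_sum differentiable_mult ballI
        differentiable_Phi_complex differentiable_g_complex k_differentiable l_differentiable) auto
  then show ?thesis unfolding \<alpha>_def[abs_def] eigenvalue_def .
qed

lemma nabla_k_combination:
  "nabla_k x (a *s p + b *s q + c *s r) = a *s nabla_k x p + b *s nabla_k x q + c *s nabla_k x r"
  unfolding nabla_k_def sum_3 by (simp add: vec_eq_iff algebra_simps)

lemma k_orthogonal_nabla_k: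
  assumes x: "x \<in> U"
  shows "bilin (g_form x) (k x) (nabla_k x v) = 0"
proof -
  have "pd c (\<lambda>y. gC g y (k y) (k y)) x = 0" for c
    by (rule pd_eq_0_on_open[OF open_U x]) (rule k_null)
  then have "bilin (g_form x) (nabla_coord k x c) (k x) + bilin (g_form x) (k x) (nabla_coord k x c) = 0" for c
    using pd_gC[OF x k_differentiable[OF x] k_differentiable[OF x], of c] by simp
  moreover have "bilin (g_form x) (nabla_coord k x c) (k x) = bilin (g_form x) (k x) (nabla_coord k x c)" for c
    by (rule bilin_sym) (rule g_form_sym[OF x])
  ultimately show ?thesis unfolding nabla_k_def bilin_sum_right by simp
qed

lemma Phi_k_eigen:
  assumes y: "y \<in> U"
  shows "bilin (Phi_form y) u (k y) = \<alpha> y * bilin (g_form y) u (k y)"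
  by (rule typeD_frame[OF y typeD[OF y], folded \<alpha>_def]) blast

text \<open>Covariant differentiation of the eigen-relation \<open>\<Phi>\<^sub>a\<^sub>b k\<^sup>b = \<alpha> g\<^sub>a\<^sub>b k\<^sup>b\<close>.\<close>

lemma nablaPhi_k:
  assumes x: "x \<in> U"
  shows "(\<Sum>b\<in>UNIV. complex_of_real (nablaPhi g x c a b) * k x $ b)
    = pd c \<alpha> x * (\<Sum>b\<in>UNIV. g_form x a b * k x $ b)
      + (\<Sum>b\<in>UNIV. (\<alpha> x * g_form x a b - Phi_form x a b) * nabla_coord k x c $ b)"
proof -
  have eigen: "(\<Sum>b\<in>UNIV. Phi_form y a b * k y $ b) - \<alpha> y * (\<Sum>b\<in>UNIV. g_form y a b * k y $ b) = 0"
    if "y \<in> U" for y a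
    using Phi_k_eigen[OF that, of "axis a 1"] unfolding bilin_axis_left by simp
  have "pd c (\<lambda>y. (\<Sum>b\<in>UNIV. Phi_form y a b * k y $ b) - \<alpha> y * (\<Sum>b\<in>UNIV. g_form y a b * k y $ b)) x = 0"
    by (rule pd_eq_0_on_open[OF open_U x eigen])
  then have product_rule: "(\<Sum>b\<in>UNIV. complex_of_real (pd c (\<lambda>y. Phi g y a b) x) * k x $ b
        + Phi_form x a b * pd c (\<lambda>y. k y $ b) x)
      - (pd c \<alpha> x * (\<Sum>b\<in>UNIV. g_form x a b * k x $ b)
        + \<alpha> x * (\<Sum>b\<in>UNIV. complex_of_real (pd c (\<lambda>y. g y a b) x) * k x $ b
        + g_form x a b * pd c (\<lambda>y. k y $ b) x)) = 0"
    unfolding Phi_form_def g_form_def using x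
    by (simp add: pd_sum pd_mult pd_diff pd_of_real differentiable_curvature differentiable_Phi_complex
        differentiable_g_complex k_differentiable \<alpha>_differentiable)
  have nablaPhi: "(\<Sum>b\<in>UNIV. complex_of_real (nablaPhi g x c a b) * k x $ b)
     = (\<Sum>b\<in>UNIV. complex_of_real (pd c (\<lambda>y. Phi g y a b) x) * k x $ b)
       - (\<Sum>e\<in>UNIV. complex_of_real (chr g x e c a) * (\<Sum>b\<in>UNIV. Phi_form x e b * k x $ b))
       - (\<Sum>b\<in>UNIV. \<Sum>e\<in>UNIV. complex_of_real (chr g x e c b) * Phi_form x a e * k x $ b)"
    unfolding nablaPhi_def Phi_form_def sum_3 by (simp add: algebra_simps)
  have eigen_x: "(\<Sum>b\<in>UNIV. Phi_form x e b * k x $ b) = \<alpha> x * (\<Sum>b\<in>UNIV. g_form x e b * k x $ b)" for e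
    using eigen[OF x, of e] by simp
  show ?thesis
    using product_rule unfolding nablaPhi eigen_x
    unfolding pd_g_chr[OF x] nabla_coord_def g_form_def sum_3 by (simp add: algebra_simps)
qed

end

context typeD_generators
begin

lemma cotton_k_contraction:
  assumes x: "x \<in> U"
    and cotton: "\<And>c. (\<Sum>a\<in>UNIV. \<Sum>b\<in>UNIV. k x $ a * k x $ b *
      complex_of_real (cotton g x a b c + 3 * g x b c * pd a (Sc g) x)) = 0"
  shows "dir_deriv_\<alpha> x (k x) * bilin (g_form x) w (k x)
      + bilin (\<lambda>a d. \<alpha> x * g_form x a d - Phi_form x a d) w (nabla_k x (k x))
    = 2 * bilin (g_form x) w (k x) * dir_deriv_S x (k x)"
proof -
  let ?K = "k x" and ?G = "g_form x" and ?F = "Phi_form x"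
  let ?M = "\<lambda>a d. \<alpha> x * ?G a d - ?F a d" and ?kS = "dir_deriv_S x (k x)"
  define A where "A c a = (\<Sum>b\<in>UNIV. complex_of_real (nablaPhi g x c a b) * ?K $ b)" for c a
  have A: "A c a = pd c \<alpha> x * (\<Sum>b\<in>UNIV. ?G a b * ?K $ b)
      + (\<Sum>d\<in>UNIV. ?M a d * nabla_coord k x c $ d)" for c a
    unfolding A_def by (rule nablaPhi_k[OF x])
  have kk: "bilin ?G ?K ?K = 0" using k_null[OF x] by (simp add: gC_eq_bilin)
  have "(\<Sum>b\<in>UNIV. ?K $ b * A c b) = 0" for c
  proof -
    have "(\<Sum>b\<in>UNIV. ?K $ b * A c b) = pd c \<alpha> x * bilin ?G ?K ?K + bilin ?M ?K (nabla_coord k x c)"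
      unfolding A bilin_def sum_3 by (simp add: algebra_simps)
    also have "\<dots> = 0"
      unfolding bilin_combination_form kk
      using Phi_k_eigen[OF x, of "nabla_coord k x c"] bilin_sym[of ?F, OF Phi_form_sym[OF x]]
        bilin_sym[of ?G, OF g_form_sym[OF x]] by simp
    finally show ?thesis .
  qed
  moreover have "(\<Sum>b\<in>UNIV. ?K $ b * A b c) = dir_deriv_\<alpha> x ?K * (\<Sum>b\<in>UNIV. ?G c b * ?K $ b)
      + (\<Sum>d\<in>UNIV. ?M c d * nabla_k x ?K $ d)" for c
    unfolding A dir_deriv_\<alpha>_def nabla_k_def sum_3 by (simp add: algebra_simps)
  ultimately have "dir_deriv_\<alpha> x ?K * (\<Sum>b\<in>UNIV. ?G c b * ?K $ b)
      + (\<Sum>d\<in>UNIV. ?M c d * nabla_k x ?K $ d) = 2 * (\<Sum>b\<in>UNIV. ?G c b * ?K $ b) * ?kS" for c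
    using cotton[of c] unfolding cotton_contraction[OF x] A_def[symmetric] dir_deriv_S_def[symmetric] kk
    by (simp add: algebra_simps)
  then have "(\<Sum>c\<in>UNIV. w $ c * (dir_deriv_\<alpha> x ?K * (\<Sum>b\<in>UNIV. ?G c b * ?K $ b)
      + (\<Sum>d\<in>UNIV. ?M c d * nabla_k x ?K $ d)))
    = (\<Sum>c\<in>UNIV. w $ c * (2 * (\<Sum>b\<in>UNIV. ?G c b * ?K $ b) * ?kS))"
    by simp
  then show ?thesis unfolding bilin_def sum_3 by (simp add: algebra_simps)
qed

lemma div_Phi_k:
  assumes x: "x \<in> U"
  shows "(\<Sum>c\<in>UNIV. \<Sum>a\<in>UNIV. complex_of_real (ginv g x c a) *
      (\<Sum>b\<in>UNIV. complex_of_real (nablaPhi g x c a b) * k x $ b)) = 2 * dir_deriv_S x (k x)"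
proof -
  have "(\<Sum>c\<in>UNIV. \<Sum>a\<in>UNIV. complex_of_real (ginv g x c a) *
      (\<Sum>b\<in>UNIV. complex_of_real (nablaPhi g x c a b) * k x $ b))
    = (\<Sum>b\<in>UNIV. k x $ b * complex_of_real (\<Sum>c\<in>UNIV. \<Sum>a\<in>UNIV. ginv g x c a * nablaPhi g x c a b))"
    unfolding sum_3 of_real_add of_real_mult by algebra
  also have "\<dots> = 2 * dir_deriv_S x (k x)"
    unfolding div_Phi[OF x] by (simp add: dir_deriv_S_def sum_distrib_left mult_ac)
  finally show ?thesis .
qed

end

text \<open>Contract the Cotton condition with \<open>n\<close> and \<open>l'\<close>, and compare the divergence of \<open>\<Phi>\<close>
  along \<open>k\<close> with the contracted Bianchi identity \<open>\<nabla>\<^sup>a\<Phi>\<^sub>a\<^sub>b = 2 \<nabla>\<^sub>b S\<close>.\<close>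

lemma (in typeD_generators) nabla_k_frame:
  assumes x: "x \<in> U"
    and cotton: "\<And>c. (\<Sum>a\<in>UNIV. \<Sum>b\<in>UNIV. k x $ a * k x $ b *
      complex_of_real (cotton g x a b c + 3 * g x b c * pd a (Sc g) x)) = 0"
  obtains n where "null_frame_bilin (g_form x) (k x) ((1 / gC g x (k x) (l x)) *s l x) n"
    "bilin (g_form x) n (nabla_k x (k x)) = 0" "bilin (g_form x) n (nabla_k x n) = 0"
proof -
  let ?K = "k x" and ?G = "g_form x" and ?F = "Phi_form x" and ?l = "(1 / gC g x (k x) (l x)) *s l x"
  let ?M = "\<lambda>a d. \<alpha> x * ?G a d - ?F a d"
  obtain n where frame: "null_frame_bilin ?G ?K ?l n" and \<alpha>: "\<alpha> x \<noteq> 0"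
    and eigen_k: "\<And>u. bilin ?F u ?K = \<alpha> x * bilin ?G u ?K"
    and eigen_l: "\<And>u. bilin ?F u ?l = \<alpha> x * bilin ?G u ?l"
    and eigen_n: "\<And>u. bilin ?F u n = - 2 * \<alpha> x * bilin ?G u n"
    and ginv: "\<And>a b. complex_of_real (ginv g x a b) = ?l $ a * ?K $ b + ?K $ a * ?l $ b - 2 * n $ a * n $ b"
    by (rule typeD_frame[OF x typeD[OF x], folded \<alpha>_def]) blast
  interpret null_frame_bilin ?G ?K ?l n by (rule frame)
  have G_sym: "\<And>u v. bilin ?G u v = bilin ?G v u" using bilin_sym g_form_sym[OF x] by blast
  have F_sym: "\<And>u v. bilin ?F u v = bilin ?F v u" using bilin_sym Phi_form_sym[OF x] by blast
  have M_k: "bilin ?M ?K v = 0" and M_l: "bilin ?M ?l v = 0" and M_n: "bilin ?M n v = 3 * \<alpha> x * bilin ?G n v"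
    for v unfolding bilin_combination_form
    using eigen_k[of v] eigen_l[of v] eigen_n[of v] F_sym G_sym by (simp_all add: algebra_simps)
  note contraction = cotton_k_contraction[OF x cotton]
  have "3 * \<alpha> x * bilin ?G n (nabla_k x ?K) = 0"
    using contraction[of n] by (simp add: nk M_n)
  then have N1: "bilin ?G n (nabla_k x ?K) = 0" using \<alpha> by simp
  have k\<alpha>: "dir_deriv_\<alpha> x ?K = 2 * dir_deriv_S x ?K"
    using contraction[of ?l] by (simp add: lk M_l)
  have "2 * dir_deriv_S x ?K = (\<Sum>c\<in>UNIV. \<Sum>a\<in>UNIV. complex_of_real (ginv g x c a) *
      (\<Sum>b\<in>UNIV. complex_of_real (nablaPhi g x c a b) * ?K $ b))"
    by (rule div_Phi_k[OF x, symmetric])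
  also have "\<dots> = dir_deriv_\<alpha> x ?l * bilin ?G ?K ?K + dir_deriv_\<alpha> x ?K * bilin ?G ?l ?K
      - 2 * dir_deriv_\<alpha> x n * bilin ?G n ?K
      + bilin ?M ?K (nabla_k x ?l) + bilin ?M ?l (nabla_k x ?K) - 2 * bilin ?M n (nabla_k x n)"
    unfolding ginv nablaPhi_k[OF x] dir_deriv_\<alpha>_def nabla_k_def bilin_def sum_3
    by (simp add: algebra_simps)
  also have "\<dots> = dir_deriv_\<alpha> x ?K - 6 * \<alpha> x * bilin ?G n (nabla_k x n)"
    by (simp add: kk lk nk M_k M_l M_n)
  finally have "6 * \<alpha> x * bilin ?G n (nabla_k x n) = 0" using k\<alpha> by simp
  then have N2: "bilin ?G n (nabla_k x n) = 0" using \<alpha> by simp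
  show ?thesis using that[OF frame N1 N2] .
qed

lemma (in typeD_generators) co_geodetic_generator:
  assumes cotton: "\<forall>x\<in>U. \<forall>c. (\<Sum>a\<in>UNIV. \<Sum>b\<in>UNIV. k x $ a * k x $ b *
    complex_of_real (cotton g x a b c + 3 * g x b c * pd a (Sc g) x)) = 0"
  shows "co_geodetic U g k"
  unfolding co_geodetic_def
proof (intro allI impI ballI)
  fix X Y Z x
  assume fields: "vfield U X \<and> vfield U Y \<and> vfield U Z \<and> (\<forall>x\<in>U. gC g x (X x) (k x) = 0) \<and>
      (\<forall>x\<in>U. gC g x (Y x) (k x) = 0) \<and> (\<forall>x\<in>U. \<exists>c. Z x = c *s k x)"
    and x: "x \<in> U"
  let ?G = "g_form x"
  obtain c where Z: "Z x = c *s k x" using fields x by blast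
  obtain n where frame: "null_frame_bilin ?G (k x) ((1 / gC g x (k x) (l x)) *s l x) n"
    and nabla_k_n: "bilin ?G n (nabla_k x (k x)) = 0" "bilin ?G n (nabla_k x n) = 0"
    using nabla_k_frame[OF x] cotton x by blast
  have Y_perp: "bilin ?G (Y x) (k x) = 0" and X_perp: "bilin ?G (X x) (k x) = 0"
    using fields x unfolding gC_eq_bilin by auto
  have "bilin ?G (nabla_coord Y x a) (k x) = - bilin ?G (Y x) (nabla_coord k x a)" for a
  proof -
    have "pd a (\<lambda>y. gC g y (Y y) (k y)) x = 0"
      by (rule pd_eq_0_on_open[OF open_U x]) (use fields in auto)
    then show ?thesis
      using pd_gC[OF x vfield_differentiable k_differentiable[OF x], of Y a] fields x
      by (simp add: eq_neg_iff_add_eq_0)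
  qed
  then have "gC g x (covD g X Y x) (Z x) = - c * bilin ?G (Y x) (nabla_k x (X x))"
    unfolding gC_eq_bilin Z bilin_scale_right bilin_covD nabla_k_def bilin_sum_right by (simp add: sum_negf)
  also have "bilin ?G (Y x) (nabla_k x (X x)) = 0"
    by (rule null_frame_bilin.bilin_perp_vanishes[OF frame nabla_k_combination
          k_orthogonal_nabla_k[OF x] nabla_k_n X_perp Y_perp])
  finally show "gC g x (covD g X Y x) (Z x) = 0" by simp
qed

theorem mainTheorem7:
  fixes U :: "(real^3) set" and g :: "real^3 \<Rightarrow> 3 \<Rightarrow> 3 \<Rightarrow> real"
    and k l :: "real^3 \<Rightarrow> complex^3"
  assumes "metric_on U g"
    and "null_generator U g k" and "null_generator U g l"
    and "\<forall>x\<in>U. typeD_at g x (k x) (l x)"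
    and "\<forall>x\<in>U. \<forall>c. (\<Sum>a\<in>UNIV. \<Sum>b\<in>UNIV. k x $ a * k x $ b *
           complex_of_real (cotton g x a b c + 3 * g x b c * pd a (Sc g) x)) = 0"
    and "\<forall>x\<in>U. \<forall>c. (\<Sum>a\<in>UNIV. \<Sum>b\<in>UNIV. l x $ a * l x $ b *
           complex_of_real (cotton g x a b c + 3 * g x b c * pd a (Sc g) x)) = 0"
  shows "co_geodetic U g k \<and> co_geodetic U g l"
proof -
  interpret metric_chart U g by unfold_locales (rule assms(1))
  have differentiable: "(\<lambda>z. v z $ b) differentiable (at y)"
    if "null_generator U g v" "y \<in> U" for v y b
    using that vfield_differentiable by (simp add: null_generator_def)
  interpret K: typeD_generators U g k l
    using assms(2-4) differentiable by unfold_locales auto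
  interpret L: typeD_generators U g l k
    using assms(2-4) differentiable typeD_at_swap by unfold_locales auto
  show ?thesis using K.co_geodetic_generator[OF assms(5)] L.co_geodetic_generator[OF assms(6)] by simp
qed

end
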